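(* Let $n\geq1$ and let $H$ be an irreducible subgroup of $SL(n,\mathbb{C})$. Then the order $n_{Z_n(H),\phi_H}$ of the Lagrangians of the associated alternate module $(Z_n(H),\phi_H)$ divides $n$.
   Context: Let $\xi=e^{2\pi i/n}$ and $\pi_n:SL(n,\mathbb{C})\to PSL(n,\mathbb{C})$. A subgroup of $SL(n,\mathbb{C})$ is irreducible if no nonzero proper subspace of $\mathbb{C}^n$ is invariant. $Z_n(H)=Z_{PSL(n,\mathbb{C})}(\pi_n(H))$, $U_n(H)=\pi_n^{-1}(Z_n(H))$, and $\phi_H(a,b)=k/n\in\mathbb{Q}/\mathbb{Z}$ where $\hat a\hat b\hat a^{-1}\hat b^{-1}=\xi^kI_n$ for lifts $\hat a,\hat b\in U_n(H)$. An alternate module is a finite abelian group $A$ with biadditive $\phi:A\times A\to\mathbb{Q}/\mathbb{Z}$, $\phi(a,a)=0$; its radical is $K_\phi=\{a:\phi(a,\cdot)=0\}$; a subgroup $L$ is Lagrangian if $L^\perp=L$, where $L^\perp=\{a:\phi(a,l)=0\ \forall l\in L\}$. All Lagrangians have the same order $n_{A,\phi}=\sqrt{|A||K_\phi|}$. *)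

theory Defs
  imports "HOL-Analysis.Analysis"
begin

text \<open>n x n complex matrices are complex^'n^'n with n = CARD('n) (n \<ge> 1 automatically).\<close>

definition SLn :: "(complex^'n::finite^'n) set" where
  "SLn = {A. det A = 1}"

text \<open>pi_n: SL(n,C) to PSL(n,C) = SL(n,C)/mu_n; an element of PSL is the coset of scalar multiples
  by n-th roots of unity.\<close>
definition projn :: "complex^'n::finite^'n \<Rightarrow> (complex^'n^'n) set" where
  "projn g = {mat c ** g | c. c ^ CARD('n) = 1}"

definition PSLn :: "(complex^'n::finite^'n) set set" where
  "PSLn = projn ` SLn"

definition cosetmul :: "(complex^'n::finite^'n) set \<Rightarrow> (complex^'n^'n) set \<Rightarrow> (complex^'n^'n) set" where
  "cosetmul X Y = {x ** y | x y. x \<in> X \<and> y \<in> Y}"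

definition sl_subgroup :: "(complex^'n::finite^'n) set \<Rightarrow> bool" where
  "sl_subgroup H \<longleftrightarrow> H \<subseteq> SLn \<and> mat 1 \<in> H \<and>
     (\<forall>a\<in>H. \<forall>b\<in>H. a ** b \<in> H) \<and> (\<forall>a\<in>H. matrix_inv a \<in> H)"

definition csubspace :: "(complex^'n::finite) set \<Rightarrow> bool" where
  "csubspace W \<longleftrightarrow> 0 \<in> W \<and> (\<forall>v\<in>W. \<forall>w\<in>W. v + w \<in> W) \<and> (\<forall>c::complex. \<forall>w\<in>W. c *s w \<in> W)"

definition sl_irreducible :: "(complex^'n::finite^'n) set \<Rightarrow> bool" where
  "sl_irreducible H \<longleftrightarrow>
     \<not> (\<exists>W. csubspace W \<and> W \<noteq> {0} \<and> W \<noteq> UNIV \<and> (\<forall>h\<in>H. \<forall>w\<in>W. h *v w \<in> W))"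

definition Zn :: "(complex^'n::finite^'n) set \<Rightarrow> (complex^'n^'n) set set" where
  "Zn H = {z \<in> PSLn. \<forall>h\<in>H. cosetmul z (projn h) = cosetmul (projn h) z}"

definition Un_H :: "(complex^'n::finite^'n) set \<Rightarrow> (complex^'n^'n) set" where
  "Un_H H = {g \<in> SLn. projn g \<in> Zn H}"

text \<open>phi_H(a,b): the scalar xi^k with ahat bhat ahat^-1 bhat^-1 = xi^k I for lifts ahat, bhat.
  Q/Z-valued k/n is encoded (isomorphically) by the root of unity xi^k; the value 0 corresponds to 1.\<close>
definition phiH :: "(complex^'n::finite^'n) set \<Rightarrow> (complex^'n^'n) set \<Rightarrow> complex" where
  "phiH a b = (let x = (SOME x. x \<in> a); y = (SOME y. y \<in> b) in
      (THE c. x ** y ** matrix_inv x ** matrix_inv y = mat c))"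

definition radK :: "(complex^'n::finite^'n) set \<Rightarrow> (complex^'n^'n) set set" where
  "radK H = {a \<in> Zn H. \<forall>b\<in>Zn H. phiH a b = 1}"

text \<open>n_{A,phi} = sqrt(|A| |K_phi|), the common order of the Lagrangians.\<close>
definition lagr_order :: "(complex^'n::finite^'n) set \<Rightarrow> real" where
  "lagr_order H = sqrt (real (card (Zn H) * card (radK H)))"

end

theory Submission
  imports Defs "Jordan_Normal_Form.Schur_Decomposition"
begin

text \<open>Let \<open>U = \<pi>\<^sub>n\<^sup>-\<^sup>1(Z\<^sub>n(H))\<close>. By Schur's lemma all commutators of elements of \<open>U\<close> are scalars
  and every non-scalar element of \<open>U\<close> has trace zero; hence lifts of distinct elements of
  \<open>Z\<^sub>n(H)\<close> are orthogonal for \<open>(a, b) \<mapsto> tr (a\<^sup>-\<^sup>1 b)\<close>, and \<open>U\<close> is finite.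
  In a finite group with scalar commutators, passing repeatedly to the centraliser of an element
  whose \<open>p\<close>-th power is central yields an abelian subgroup \<open>L \<supseteq> Z(U)\<close> with
  \<open>|L|\<^sup>2 = |U| |Z(U)| = n\<^sup>2 |Z\<^sub>n(H)| |K\<^sub>\<phi>|\<close>, so \<open>|L| = n m\<close> where \<open>m\<close> is the order of the Lagrangians.
  A common eigenvector of \<open>L\<close> gives a character \<open>\<psi>\<close> with \<open>\<psi>(c I) = c\<close>, and the trace of the
  idempotent \<open>|L|\<^sup>-\<^sup>1 \<Sum>\<^sub>a \<psi>(a)\<^sup>-\<^sup>1 a\<close> is the natural number \<open>n\<^sup>2 / |L| = n / m\<close>.\<close>

type_synonym 'n cmatrix = "complex^'n^'n"

hide_const (open) Matrix.mat Determinant.det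

section \<open>Eigenvectors and idempotents\<close>

definition to_index :: "'n::finite \<Rightarrow> nat" where
  "to_index = (SOME f. bij_betw f (UNIV::'n set) {0..<CARD('n)})"

definition from_index :: "nat \<Rightarrow> 'n::finite" where
  "from_index = inv_into UNIV to_index"

lemma bij_to_index: "bij_betw (to_index::'n::finite \<Rightarrow> nat) UNIV {0..<CARD('n)}"
proof -
  have "\<exists>f. bij_betw f (UNIV::'n set) {0..<CARD('n)}"
    using ex_bij_betw_finite_nat[of "UNIV::'n set"] by simp
  then show ?thesis unfolding to_index_def by (rule someI_ex)
qed

lemma bij_from_index: "bij_betw (from_index::nat \<Rightarrow> 'n::finite) {0..<CARD('n)} UNIV"
  unfolding from_index_def using bij_to_index bij_betw_inv_into by blast

lemma to_from_index [simp]: "i < CARD('n) \<Longrightarrow> to_index (from_index i :: 'n::finite) = i"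
  unfolding from_index_def using bij_to_index[where 'n='n] by (simp add: bij_betw_inv_into_right)

lemma from_to_index [simp]: "from_index (to_index (k::'n::finite)) = k"
  unfolding from_index_def using bij_to_index[where 'n='n] by (simp add: bij_betw_inv_into_left)

lemma to_index_less [simp]: "to_index (k::'n::finite) < CARD('n)"
  using bij_to_index[where 'n='n] by (auto simp: bij_betw_def)

lemma sum_from_index: "(\<Sum>k<CARD('n). f (from_index k :: 'n::finite)) = (\<Sum>k\<in>UNIV. f k)"
  using sum.reindex_bij_betw[OF bij_from_index, of f] by (simp add: atLeast0LessThan)

definition to_jnf :: "'a::zero^'n::finite^'n \<Rightarrow> 'a Matrix.mat" where
  "to_jnf A = Matrix.mat CARD('n) CARD('n) (\<lambda>(i,j). A $ from_index i $ from_index j)"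

definition from_jnf_vec :: "'a Matrix.vec \<Rightarrow> 'a::zero^'n::finite" where
  "from_jnf_vec v = (\<chi> k. v $ to_index k)"

lemma to_jnf_carrier [simp]: "to_jnf (A::'a::zero^'n::finite^'n) \<in> carrier_mat CARD('n) CARD('n)"
  by (simp add: to_jnf_def)

lemma to_jnf_mult: "to_jnf ((A::'a::comm_semiring_1^'n::finite^'n) ** B) = to_jnf A * to_jnf B"
proof (rule eq_matI)
  fix i j assume "i < dim_row (to_jnf A * to_jnf B)" "j < dim_col (to_jnf A * to_jnf B)"
  then have i: "i < CARD('n)" and j: "j < CARD('n)" by (auto simp: to_jnf_def)
  have "(to_jnf A * to_jnf B) $$ (i,j) =
      (\<Sum>k<CARD('n). A $ from_index i $ from_index k * B $ from_index k $ from_index j)"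
    using i j by (simp add: to_jnf_def scalar_prod_def row_def col_def atLeast0LessThan)
  also have "\<dots> = (\<Sum>k\<in>UNIV. A $ from_index i $ k * B $ k $ from_index j)"
    by (rule sum_from_index)
  finally show "to_jnf (A ** B) $$ (i,j) = (to_jnf A * to_jnf B) $$ (i,j)"
    using i j by (simp add: to_jnf_def matrix_matrix_mult_def)
qed (auto simp: to_jnf_def)

lemma from_jnf_vec_mult:
  assumes "v \<in> carrier_vec CARD('n)"
  shows "from_jnf_vec (to_jnf (A::'a::comm_semiring_1^'n::finite^'n) *\<^sub>v v) = A *v from_jnf_vec v"
proof -
  have "(to_jnf A *\<^sub>v v) $ to_index k = (\<Sum>j\<in>UNIV. A $ k $ j * v $ to_index j)" for k
  proof -
    have "(to_jnf A *\<^sub>v v) $ to_index k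
        = (\<Sum>j<CARD('n). A $ k $ from_index j * v $ to_index (from_index j :: 'n))"
      using assms by (simp add: to_jnf_def scalar_prod_def row_def atLeast0LessThan)
    also have "\<dots> = (\<Sum>j\<in>UNIV. A $ k $ j * v $ to_index j)" by (rule sum_from_index)
    finally show ?thesis .
  qed
  then show ?thesis by (simp add: from_jnf_vec_def matrix_vector_mult_def vec_eq_iff)
qed

lemma eigenvector_exists:
  fixes A :: "complex^'n::finite^'n"
  shows "\<exists>c v. v \<noteq> 0 \<and> A *v v = c *s v"
proof -
  obtain es where cp: "char_poly (to_jnf A) = (\<Prod>a\<leftarrow>es. [:- a, 1:])" and len: "length es = CARD('n)"
    using char_poly_factorized[OF to_jnf_carrier[of A]] by blast
  then obtain c es' where "es = c # es'" by (cases es) auto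
  then have "poly (char_poly (to_jnf A)) c = 0" unfolding cp by simp
  then have "eigenvalue (to_jnf A) c" using eigenvalue_root_char_poly[OF to_jnf_carrier[of A]] by simp
  then obtain v where "eigenvector (to_jnf A) v c" unfolding eigenvalue_def by blast
  then have vc: "v \<in> carrier_vec CARD('n)" and vnz: "v \<noteq> 0\<^sub>v CARD('n)"
    and Av: "to_jnf A *\<^sub>v v = c \<cdot>\<^sub>v v"
    unfolding eigenvector_def by (auto simp: to_jnf_def)
  from vnz vc obtain i where i: "i < CARD('n)" and vi: "v $ i \<noteq> 0"
    by (metis carrier_vecD eq_vecI index_zero_vec(1) index_zero_vec(2))
  have "from_jnf_vec v $ (from_index i :: 'n) = v $ i" using i by (simp add: from_jnf_vec_def)
  then have nz: "(from_jnf_vec v :: complex^'n) \<noteq> 0" using vi by auto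
  have "A *v from_jnf_vec v = from_jnf_vec (to_jnf A *\<^sub>v v)" using from_jnf_vec_mult[OF vc] by simp
  also have "\<dots> = c *s from_jnf_vec v"
    unfolding Av using vc by (simp add: from_jnf_vec_def vec_eq_iff vector_scalar_mult_def)
  finally show ?thesis using nz by blast
qed

definition jnf_trace :: "'a::comm_ring_1 Matrix.mat \<Rightarrow> 'a" where
  "jnf_trace M = (\<Sum>i<dim_row M. M $$ (i,i))"

lemma jnf_trace_mult_commute:
  assumes "X \<in> carrier_mat n m" "Y \<in> carrier_mat m n"
  shows "jnf_trace (X * Y) = jnf_trace (Y * X)"
proof -
  have "jnf_trace (X * Y) = (\<Sum>i<n. \<Sum>k<m. X $$ (i,k) * Y $$ (k,i))"
    using assms by (simp add: jnf_trace_def scalar_prod_def row_def col_def atLeast0LessThan)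
  also have "\<dots> = (\<Sum>k<m. \<Sum>i<n. Y $$ (k,i) * X $$ (i,k))"
    by (subst sum.swap) (simp add: mult.commute)
  also have "\<dots> = jnf_trace (Y * X)"
    using assms by (simp add: jnf_trace_def scalar_prod_def row_def col_def atLeast0LessThan)
  finally show ?thesis .
qed

lemma jnf_trace_to_jnf: "jnf_trace (to_jnf (A::'a::comm_ring_1^'n::finite^'n)) = trace A"
  unfolding jnf_trace_def trace_def using sum_from_index[of "\<lambda>i. A $ i $ i"]
  by (simp add: to_jnf_def)

lemma upper_triangular_idempotent_diag:
  assumes T: "T \<in> carrier_mat n n" "upper_triangular T" and TT: "T * T = T" and i: "i < n"
  shows "T $$ (i,i) = 0 \<or> T $$ (i,i) = (1::'a::idom)"
proof -
  have "T $$ (i,i) = (\<Sum>k<n. T $$ (i,k) * T $$ (k,i))"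
    using T i arg_cong[OF TT, of "\<lambda>M. M $$ (i,i)"]
    by (simp add: scalar_prod_def row_def col_def atLeast0LessThan)
  also have "\<dots> = (\<Sum>k\<in>{i}. T $$ (i,k) * T $$ (k,i))"
  proof (rule sum.mono_neutral_right)
    show "\<forall>k\<in>{..<n} - {i}. T $$ (i,k) * T $$ (k,i) = 0"
      using T unfolding upper_triangular_def by (metis DiffE insertI1 lessThan_iff linorder_neqE_nat
          mult_eq_0_iff order.strict_trans carrier_matD(1) i)
  qed (use i in auto)
  finally have "T $$ (i,i) * T $$ (i,i) = T $$ (i,i)" by simp
  then show ?thesis by (metis mult_cancel_left2 mult_zero_left)
qed

text \<open>An upper triangular matrix similar to an idempotent one is again idempotent, so its
  diagonal entries are 0 or 1.\<close>

lemma jnf_trace_idempotent: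
  fixes B :: "complex Matrix.mat"
  assumes B: "B \<in> carrier_mat n n" and BB: "B * B = B"
  shows "\<exists>k::nat. jnf_trace B = of_nat k"
proof -
  obtain es where "char_poly B = (\<Prod>a\<leftarrow>es. [:- a, 1:])"
    using char_poly_factorized[OF B] by blast
  then obtain T where T: "T \<in> carrier_mat n n" "upper_triangular T" "similar_mat B T"
    using schur_upper_triangular[OF B] by blast
  then obtain P Q where wit: "similar_mat_wit B T P Q" unfolding similar_mat_def by blast
  note d = similar_mat_witD2[OF B wit]
  have "T ^\<^sub>m 2 = Q * B ^\<^sub>m 2 * P"
    using similar_mat_wit_pow_id[OF similar_mat_wit_sym[OF wit]] .
  also have "B ^\<^sub>m 2 = B" using B BB by (simp add: numeral_2_eq_2)
  also have "Q * B * P = T"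
    using similar_mat_witD2[OF T(1) similar_mat_wit_sym[OF wit]] by simp
  finally have TT: "T * T = T" using T(1) by (simp add: numeral_2_eq_2)
  have "jnf_trace B = jnf_trace (P * T * Q)" using d by simp
  also have "\<dots> = jnf_trace (Q * (P * T))"
    by (rule jnf_trace_mult_commute) (use d in auto)
  also have "Q * (P * T) = T"
    using d by (simp add: assoc_mult_mat[of Q n n P n T n, symmetric])
  also have "jnf_trace T = (\<Sum>i<n. if T $$ (i,i) = 1 then 1 else 0)"
    unfolding jnf_trace_def using T(1) upper_triangular_idempotent_diag[OF T(1,2) TT]
    by (intro sum.cong) auto
  also have "\<dots> = of_nat (card {i\<in>{..<n}. T $$ (i,i) = 1})"
    by (simp add: sum.If_cases Int_def conj_commute)
  finally show ?thesis by blast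
qed

lemma trace_idempotent:
  fixes Q :: "complex^'n::finite^'n"
  assumes "Q ** Q = Q"
  shows "\<exists>k::nat. trace Q = of_nat k"
  using jnf_trace_idempotent[OF to_jnf_carrier[of Q]] assms to_jnf_mult[of Q Q] jnf_trace_to_jnf[of Q]
  by metis

section \<open>Scalar matrices, Schur's lemma and the trace form\<close>

lemma scalar_mat_nth: "(mat c :: 'a::zero^'n^'n) $ i $ j = (if i = j then c else 0)"
  by (simp add: Finite_Cartesian_Product.mat_def)

lemma scalar_mat_mult_nth: "(mat c ** A :: 'a::semiring_1^'n^'n) $ i $ j = c * A $ i $ j"
  by (simp add: matrix_matrix_mult_def scalar_mat_nth if_distrib[of "\<lambda>x. x * y" for y] cong: if_cong)

lemma mult_scalar_mat_nth: "(A ** mat c :: 'a::semiring_1^'n^'n) $ i $ j = A $ i $ j * c"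
  by (simp add: matrix_matrix_mult_def scalar_mat_nth if_distrib[of "\<lambda>x. y * x" for y] cong: if_cong)

lemma scalar_mat_commute: "A ** mat c = mat c ** (A :: 'a::comm_semiring_1^'n^'n)"
  by (simp add: Finite_Cartesian_Product.vec_eq_iff scalar_mat_mult_nth mult_scalar_mat_nth mult.commute)

lemma scalar_mat_mult_scalar_mat:
  "mat c ** (mat d ** A) = mat (c * d) ** (A :: 'a::comm_semiring_1^'n^'n)"
  by (simp add: Finite_Cartesian_Product.vec_eq_iff scalar_mat_mult_nth mult.assoc)

lemma mult_scalar_mat_left_commute:
  fixes A B :: "'a::comm_semiring_1^'n^'n"
  shows "A ** (mat c ** B) = mat c ** (A ** B)"
proof -
  have "A ** (mat c ** B) = (A ** mat c) ** B" by (rule matrix_mul_assoc)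
  also have "\<dots> = (mat c ** A) ** B" by (simp only: scalar_mat_commute[of A c])
  finally show ?thesis by (simp only: matrix_mul_assoc)
qed

lemma scalar_mat_inject [simp]: "(mat c :: 'a::zero^'n::finite^'n) = mat d \<longleftrightarrow> c = d"
proof
  assume "(mat c :: 'a^'n^'n) = mat d"
  then have "(mat c :: 'a^'n^'n) $ i $ i = mat d $ i $ i" for i by simp
  then show "c = d" by (simp add: scalar_mat_nth)
qed simp

lemma scalar_mat_neq_0: "(mat (1::'a::zero_neq_one) :: 'a^'n::finite^'n) \<noteq> 0"
proof
  assume "(mat 1 :: 'a^'n^'n) = 0"
  then have "(mat 1 :: 'a^'n^'n) $ i $ i = 0 $ i $ i" for i by simp
  then show False by (simp add: scalar_mat_nth)
qed

lemma det_scalar_mat: "det (mat c :: 'a::comm_ring_1^'n::finite^'n) = c ^ CARD('n)"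
  by (subst det_diagonal) (auto simp: scalar_mat_nth)

lemma scalar_mat_mult_vec: "mat c *v v = c *s (v :: 'a::comm_semiring_1^'n)"
  by (simp add: Finite_Cartesian_Product.vec_eq_iff matrix_vector_mult_def scalar_mat_nth
      if_distrib[of "\<lambda>x. x * y" for y] cong: if_cong)

lemma trace_scalar_mat: "trace (mat c :: 'a::comm_semiring_1^'n::finite^'n) = c * of_nat CARD('n)"
  by (simp add: trace_def scalar_mat_nth mult.commute)

lemma trace_scalar_mat_mult: "trace (mat c ** A :: 'a::comm_semiring_1^'n^'n) = c * trace A"
  by (simp add: trace_def scalar_mat_mult_nth sum_distrib_left)

lemma matrix_add_rdistrib: "(B + C) ** A = B ** A + C ** (A::'a::semiring_1^'n^'n)"
  by (simp add: matrix_matrix_mult_def Finite_Cartesian_Product.vec_eq_iff sum.distrib distrib_right)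

lemma sum_matrix_mult: "finite S \<Longrightarrow> (\<Sum>a\<in>S. f a) ** B = (\<Sum>a\<in>S. f a ** (B :: 'a::semiring_1^'n^'n))"
  by (induction S rule: finite_induct) (auto simp: matrix_add_rdistrib)

lemma matrix_mult_sum: "finite S \<Longrightarrow> B ** (\<Sum>a\<in>S. f a) = (\<Sum>a\<in>S. B ** (f a :: 'a::semiring_1^'n^'n))"
  by (induction S rule: finite_induct) (auto simp: matrix_add_ldistrib)

lemma trace_sum: "finite S \<Longrightarrow> trace (\<Sum>a\<in>S. f a) = (\<Sum>a\<in>S. trace (f a :: 'a::comm_semiring_1^'n^'n))"
  by (induction S rule: finite_induct) (auto simp: trace_add trace_0[simplified])

lemma sum_scalar_mat_mult:
  "finite S \<Longrightarrow> (\<Sum>a\<in>S. mat (f a) ** A) = mat (\<Sum>a\<in>S. f a) ** (A :: 'a::comm_semiring_1^'n^'n)"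
  by (induction S rule: finite_induct) (auto simp: Finite_Cartesian_Product.vec_eq_iff scalar_mat_mult_nth distrib_right)

lemma matrix_eq_0_iff_mult_vec: "(E :: 'a::semiring_1^'n^'m) = 0 \<longleftrightarrow> (\<forall>v. E *v v = 0)"
  using matrix_eq[of E 0] by simp

lemma
  fixes A :: "'a::field^'n::finite^'n"
  assumes "invertible A"
  shows matrix_inv_right: "A ** matrix_inv A = mat 1"
    and matrix_inv_left: "matrix_inv A ** A = mat 1"
  using someI_ex[OF assms[unfolded invertible_def]] unfolding matrix_inv_def by auto

lemma det_matrix_inv:
  fixes A :: "'a::field^'n::finite^'n"
  assumes "invertible A"
  shows "det (matrix_inv A) = inverse (det A)"
proof -
  have "det A * det (matrix_inv A) = det (A ** matrix_inv A)"
    by (simp only: Determinants.det_mul)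
  also have "\<dots> = 1" by (simp only: matrix_inv_right[OF assms] Determinants.det_I)
  finally show ?thesis by (rule inverse_unique[symmetric])
qed

lemma matrix_mult_left_cancel:
  fixes A :: "'a::field^'n::finite^'n"
  assumes "invertible A" "A ** B = A ** C"
  shows "B = C"
proof -
  have "matrix_inv A ** (A ** B) = matrix_inv A ** (A ** C)" using assms(2) by simp
  then show ?thesis using matrix_inv_left[OF assms(1)] by (simp add: matrix_mul_assoc)
qed

lemma matrix_mult_right_cancel:
  fixes A :: "'a::field^'n::finite^'n"
  assumes "invertible A" "B ** A = C ** A"
  shows "B = C"
proof -
  have "(B ** A) ** matrix_inv A = (C ** A) ** matrix_inv A" using assms(2) by simp
  then show ?thesis using matrix_inv_right[OF assms(1)] by (simp add: matrix_mul_assoc[symmetric])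
qed

lemma scalar_mat_mult_cancel:
  fixes M :: "'a::field^'n::finite^'n"
  assumes "invertible M" "mat c ** M = mat d ** M"
  shows "c = d"
  using matrix_mult_right_cancel[OF assms] by simp

lemma matrix_inv_commute:
  fixes g x :: "'a::field^'n::finite^'n"
  assumes "invertible g" "x ** g = g ** x"
  shows "x ** matrix_inv g = matrix_inv g ** x"
proof -
  have "x ** matrix_inv g = (matrix_inv g ** g) ** x ** matrix_inv g"
    using matrix_inv_left[OF assms(1)] by simp
  also have "\<dots> = matrix_inv g ** (x ** g) ** matrix_inv g"
    using assms(2) by (simp add: matrix_mul_assoc)
  also have "\<dots> = matrix_inv g ** x ** (g ** matrix_inv g)" by (simp add: matrix_mul_assoc)
  also have "\<dots> = matrix_inv g ** x" using matrix_inv_right[OF assms(1)] by simp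
  finally show ?thesis .
qed

lemma csubspace_eigenspace: "csubspace {w. A *v w = c *s w}"
  unfolding csubspace_def
proof (intro conjI ballI allI)
  fix x y assume "x \<in> {w. A *v w = c *s w}" "y \<in> {w. A *v w = c *s w}"
  then show "x + y \<in> {w. A *v w = c *s w}"
    by (simp add: matrix_vector_right_distrib vector_add_ldistrib)
next
  fix d x assume "x \<in> {w. A *v w = c *s w}"
  then have "A *v (d *s x) = d *s (c *s x)" by (simp add: vec.scale)
  also have "\<dots> = c *s (d *s x)" by (simp add: vector_smult_assoc mult.commute)
  finally show "d *s x \<in> {w. A *v w = c *s w}" by simp
qed simp

lemma eigenspace_invariant:
  fixes A h :: "'a::field^'n^'n"
  assumes "A ** h = h ** A" "A *v w = c *s w"
  shows "A *v (h *v w) = c *s (h *v w)"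
proof -
  have "A *v (h *v w) = h *v (A *v w)" using assms(1) by (simp add: matrix_vector_mul_assoc)
  also have "\<dots> = c *s (h *v w)" using assms(2) by (simp add: vec.scale)
  finally show ?thesis .
qed

lemma schur_lemma:
  fixes A :: "'n::finite cmatrix"
  assumes irr: "sl_irreducible H" and comm: "\<forall>h\<in>H. A ** h = h ** A"
  shows "\<exists>c. A = mat c"
proof -
  obtain c v where v: "v \<noteq> 0" "A *v v = c *s v" using eigenvector_exists[of A] by blast
  have "{w. A *v w = c *s w} = UNIV"
    using irr csubspace_eigenspace v eigenspace_invariant comm
    unfolding sl_irreducible_def by blast
  then have "A = mat c" by (auto simp: scalar_mat_mult_vec matrix_eq)
  then show ?thesis ..
qed

definition flatten :: "'a^'n^'m \<Rightarrow> 'a^('m \<times> 'n)" where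
  "flatten a = (\<chi> p. a $ fst p $ snd p)"

lemma inj_flatten: "inj flatten"
proof (rule injI)
  fix a b :: "'a^'n^'m" assume "flatten a = flatten b"
  then have "flatten a $ (i, j) = flatten b $ (i, j)" for i j by simp
  then show "a = b" by (simp add: flatten_def Finite_Cartesian_Product.vec_eq_iff)
qed

definition trace_pairing :: "'a::comm_semiring_1^'n^'n \<Rightarrow> 'a^('n \<times> 'n) \<Rightarrow> 'a" where
  "trace_pairing b v = (\<Sum>i\<in>UNIV. \<Sum>k\<in>UNIV. b $ i $ k * v $ (k, i))"

lemma trace_pairing_flatten: "trace_pairing b (flatten a) = trace (b ** a)"
  by (simp add: trace_pairing_def flatten_def trace_def matrix_matrix_mult_def)

lemma trace_pairing_sum:
  "finite T \<Longrightarrow> trace_pairing b (\<Sum>v\<in>T. u v *s v) = (\<Sum>v\<in>T. u v * trace_pairing b v)"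
  by (induction T rule: finite_induct)
     (simp_all add: trace_pairing_def distrib_left sum.distrib sum_distrib_left mult.left_commute)

text \<open>Invertible matrices that are pairwise orthogonal for \<open>(a, b) \<mapsto> tr (a\<^sup>-\<^sup>1 b)\<close> are linearly
  independent.\<close>

lemma finite_if_trace_orthogonal:
  fixes F :: "'n::finite cmatrix set"
  assumes inv: "\<forall>a\<in>F. invertible a"
    and orth: "\<forall>a\<in>F. \<forall>b\<in>F. a \<noteq> b \<longrightarrow> trace (matrix_inv a ** b) = 0"
  shows "finite F"
proof -
  have "vec.independent (flatten ` F)"
    unfolding vec.independent_explicit_finite_subsets
  proof (intro allI impI ballI)
    fix T u v assume T: "T \<subseteq> flatten ` F" and finT: "finite T"
      and sum0: "(\<Sum>v\<in>T. u v *s v) = 0" and v: "v \<in> T"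
    obtain a0 where a0: "a0 \<in> F" "v = flatten a0" using T v by auto
    have val: "trace_pairing (matrix_inv a0) v' = (if v' = v then of_nat CARD('n) else 0)"
      if v': "v' \<in> T" for v'
    proof -
      obtain a where a: "a \<in> F" "v' = flatten a" using T v' by auto
      show ?thesis
      proof (cases "a = a0")
        case True
        then show ?thesis
          using a a0 trace_pairing_flatten[of "matrix_inv a0" a0] matrix_inv_left[of a0] inv
          by (simp add: trace_I)
      next
        case False
        then have "v' \<noteq> v" using a a0 inj_flatten by (auto simp: inj_def)
        then show ?thesis using a a0 trace_pairing_flatten[of "matrix_inv a0" a] orth False by simp
      qed
    qed
    have "0 = trace_pairing (matrix_inv a0) (\<Sum>v\<in>T. u v *s v)"
      using sum0 by (simp add: trace_pairing_def)
    also have "\<dots> = (\<Sum>v'\<in>T. u v' * trace_pairing (matrix_inv a0) v')"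
      by (rule trace_pairing_sum[OF finT])
    also have "\<dots> = (\<Sum>v'\<in>T. if v' = v then u v * of_nat CARD('n) else 0)"
      by (rule sum.cong) (auto simp: val)
    also have "\<dots> = u v * of_nat CARD('n)" using finT v by (simp add: sum.delta)
    finally show "u v = 0" by simp
  qed
  then have "finite (flatten ` F)" by (rule vec.finiteI_independent)
  then show "finite F" using finite_imageD inj_on_subset[OF inj_flatten subset_UNIV] by blast
qed

section \<open>Simultaneous eigenvectors of commuting matrices of finite order\<close>

fun matpow :: "'a::semiring_1^'n^'n \<Rightarrow> nat \<Rightarrow> 'a^'n^'n" where
  "matpow A 0 = mat 1"
| "matpow A (Suc k) = A ** matpow A k"

lemma matpow_add: "matpow A (i + j) = matpow A i ** matpow A j"
  by (induction i) (auto simp: matrix_mul_assoc)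

lemma matpow_mult: "matpow A (i * j) = matpow (matpow A i) j"
proof (induction j)
  case (Suc j)
  have "matpow A (i * Suc j) = matpow A i ** matpow A (i * j)"
    using matpow_add[of A i "i * j"] by simp
  then show ?case using Suc by simp
qed simp

lemma matpow_commute: "A ** B = B ** A \<Longrightarrow> matpow A k ** B = B ** matpow A k"
proof (induction k)
  case (Suc k)
  have "matpow A (Suc k) ** B = A ** (matpow A k ** B)" by (simp add: matrix_mul_assoc)
  also have "\<dots> = (A ** B) ** matpow A k" using Suc by (simp add: matrix_mul_assoc)
  also have "\<dots> = B ** matpow A (Suc k)" using Suc.prems by (simp add: matrix_mul_assoc)
  finally show ?case .
qed simp

lemma sum_roots_unity_power:
  assumes "0 < j" "j < m"
  shows "(\<Sum>z\<in>{z::complex. z ^ m = 1}. z ^ j) = 0"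
proof -
  define R where "R = {z::complex. z ^ m = 1}"
  define w where "w = cis (2 * pi / real m)"
  have m: "0 < m" using assms by simp
  have "w ^ m = cis (real m * (2 * pi / real m))" unfolding w_def by (rule Complex.DeMoivre)
  then have wm: "w ^ m = 1" using m by (simp add: complex_eq_iff)
  have inj: "inj_on (\<lambda>k. cis (2 * pi * real k / real m)) {..<m}"
    using Complex.bij_betw_roots_unity[OF m] by (auto simp: bij_betw_def)
  have "cis (2 * pi * real j / real m) \<noteq> cis (2 * pi * real 0 / real m)"
    using inj_onD[OF inj, of j 0] assms by auto
  then have wj: "w ^ j \<noteq> 1" by (simp add: w_def Complex.DeMoivre mult.commute)
  have w0: "w \<noteq> 0" by (simp add: w_def)
  have "(\<Sum>z\<in>R. z ^ j) = (\<Sum>z\<in>R. (w * z) ^ j)"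
  proof (rule sum.reindex_bij_witness[where j="\<lambda>z. z / w" and i="\<lambda>z. w * z"])
    fix z assume "z \<in> R" then show "z / w \<in> R" using wm w0 by (simp add: R_def power_divide)
  next
    fix z assume "z \<in> R" then show "w * z \<in> R" using wm by (simp add: R_def power_mult_distrib)
  qed (use w0 in auto)
  also have "\<dots> = w ^ j * (\<Sum>z\<in>R. z ^ j)" by (simp add: power_mult_distrib sum_distrib_left)
  finally have "(1 - w ^ j) * (\<Sum>z\<in>R. z ^ j) = 0" by (simp add: algebra_simps)
  then show ?thesis using wj unfolding R_def by simp
qed

lemma sum_roots_unity_inverse_power:
  assumes "0 < m" "j < m"
  shows "(\<Sum>z\<in>{z::complex. z ^ m = 1}. inverse z ^ j) = (if j = 0 then of_nat m else 0)"
proof -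
  have "(\<Sum>z\<in>{z::complex. z ^ m = 1}. inverse z ^ j) = (\<Sum>z\<in>{z::complex. z ^ m = 1}. z ^ j)"
    by (rule sum.reindex_bij_witness[where i=inverse and j=inverse]) (auto simp: power_inverse)
  then show ?thesis
    using card_roots_unity_eq[OF assms(1)] sum_roots_unity_power[OF _ assms(2)] by auto
qed

text \<open>If \<open>b\<^sup>m = 1\<close> then \<open>eigenprojector b m l\<close> is \<open>m\<close> times the projection onto the
  \<open>l\<close>-eigenspace of \<open>b\<close> along the other eigenspaces.\<close>

definition eigenprojector :: "'n::finite cmatrix \<Rightarrow> nat \<Rightarrow> complex \<Rightarrow> 'n cmatrix" where
  "eigenprojector b m l = (\<Sum>j<m. mat (inverse l ^ j) ** matpow b j)"

lemma sum_eigenprojectors: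
  assumes "0 < m"
  shows "(\<Sum>l\<in>{l. l ^ m = 1}. eigenprojector b m l) = mat (of_nat m)"
proof -
  have fin: "finite {l::complex. l ^ m = 1}" using finite_roots_unity[of m] assms by simp
  have "(\<Sum>l\<in>{l. l ^ m = 1}. eigenprojector b m l)
      = (\<Sum>j<m. mat (\<Sum>l\<in>{l::complex. l ^ m = 1}. inverse l ^ j) ** matpow b j)"
    unfolding eigenprojector_def by (subst sum.swap) (simp add: sum_scalar_mat_mult[OF fin])
  also have "\<dots> = (\<Sum>j<m. mat (if j = 0 then of_nat m else 0) ** matpow b j)"
    using sum_roots_unity_inverse_power[OF assms] by simp
  also have "\<dots> = (\<Sum>j\<in>{0}. mat (of_nat m) ** matpow b j)"
    by (rule sum.mono_neutral_cong_right) (use assms in auto)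
  finally show ?thesis by simp
qed

lemma eigenprojector_eigen:
  assumes "matpow b m = mat 1" and l: "l ^ m = 1" and "0 < m"
  shows "b ** eigenprojector b m l = mat l ** eigenprojector b m l"
proof -
  have l0: "l \<noteq> 0" using l assms(3) by (auto simp: zero_power)
  define f where "f j = mat (inverse l ^ j) ** matpow b j" for j
  have "f m = f 0" using assms unfolding f_def by (simp add: power_inverse)
  then have shift: "(\<Sum>j<m. f (Suc j)) = (\<Sum>j<m. f j)"
    using sum.lessThan_Suc_shift[of f m] by (simp add: add.commute)
  have "b ** eigenprojector b m l = (\<Sum>j<m. mat (inverse l ^ j) ** matpow b (Suc j))"
    unfolding eigenprojector_def by (simp add: matrix_mult_sum mult_scalar_mat_left_commute)
  also have "\<dots> = (\<Sum>j<m. mat l ** f (Suc j))"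
    using l0 by (intro sum.cong) (auto simp: f_def scalar_mat_mult_scalar_mat field_simps)
  also have "\<dots> = mat l ** eigenprojector b m l"
    unfolding eigenprojector_def f_def[symmetric] shift[symmetric] by (simp add: matrix_mult_sum)
  finally show ?thesis .
qed

lemma eigenprojector_commute:
  assumes "a ** b = b ** a"
  shows "a ** eigenprojector b m l = eigenprojector b m l ** a"
proof -
  have "a ** (mat (inverse l ^ j) ** matpow b j) = (mat (inverse l ^ j) ** matpow b j) ** a" for j
    using matpow_commute[of b a j] assms
    by (simp add: mult_scalar_mat_left_commute matrix_mul_assoc[symmetric])
  then show ?thesis unfolding eigenprojector_def by (simp add: matrix_mult_sum sum_matrix_mult)
qed

lemma eigenprojector_mult_nonzero:
  fixes E :: "'n::finite cmatrix"
  assumes m: "0 < m" and E: "E \<noteq> 0"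
  shows "\<exists>l. l ^ m = 1 \<and> eigenprojector b m l ** E \<noteq> 0"
proof -
  define R where "R = {l::complex. l ^ m = 1}"
  have fin: "finite R" unfolding R_def using finite_roots_unity[of m] m by simp
  have "mat (of_nat m) ** E \<noteq> 0"
  proof
    assume "mat (of_nat m) ** E = 0"
    then have "mat (inverse (of_nat m) * of_nat m) ** E = 0"
      by (simp add: scalar_mat_mult_scalar_mat[symmetric])
    then show False using m E by simp
  qed
  then have "(\<Sum>l\<in>R. eigenprojector b m l ** E) \<noteq> 0"
    using sum_eigenprojectors[OF m, of b] sum_matrix_mult[OF fin, of "eigenprojector b m" E]
    unfolding R_def by simp
  then obtain l where "l \<in> R" "eigenprojector b m l ** E \<noteq> 0" by (meson sum.neutral)
  then show ?thesis unfolding R_def by blast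
qed

lemma common_eigenmatrix:
  fixes G :: "'n::finite cmatrix set"
  assumes comm: "\<forall>a\<in>G. \<forall>b\<in>G. a ** b = b ** a"
    and ord: "\<forall>a\<in>G. \<exists>m>0. matpow a m = mat 1"
    and "finite F" "F \<subseteq> G"
  shows "\<exists>E. E \<noteq> 0 \<and> (\<forall>a\<in>G. a ** E = E ** a) \<and> (\<forall>a\<in>F. \<exists>c. a ** E = mat c ** E)"
  using assms(3,4)
proof (induction F rule: finite_induct)
  case empty
  show ?case by (rule exI[of _ "mat 1"]) (simp add: scalar_mat_neq_0)
next
  case (insert b F)
  then obtain E where E: "E \<noteq> 0" "\<forall>a\<in>G. a ** E = E ** a" "\<forall>a\<in>F. \<exists>c. a ** E = mat c ** E"
    by auto
  have b: "b \<in> G" using insert by simp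
  obtain m where m: "0 < m" "matpow b m = mat 1" using ord b by blast
  obtain l where l: "l ^ m = 1" and nz: "eigenprojector b m l ** E \<noteq> 0"
    using eigenprojector_mult_nonzero[OF m(1) E(1)] by blast
  define P where "P = eigenprojector b m l"
  have P: "a ** P = P ** a" if "a \<in> G" for a
    unfolding P_def using eigenprojector_commute comm b that by blast
  show ?case
  proof (rule exI[of _ "P ** E"], intro conjI ballI)
    show "P ** E \<noteq> 0" using nz by (simp add: P_def)
    show "a ** (P ** E) = P ** E ** a" if "a \<in> G" for a
    proof -
      have "a ** (P ** E) = (P ** a) ** E" using P[OF that] by (simp add: matrix_mul_assoc)
      also have "\<dots> = P ** (E ** a)" using E(2) that by (simp add: matrix_mul_assoc[symmetric])
      also have "\<dots> = P ** E ** a" by (simp add: matrix_mul_assoc)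
      finally show ?thesis .
    qed
    show "\<exists>c. a ** (P ** E) = mat c ** (P ** E)" if a: "a \<in> insert b F" for a
    proof (cases "a = b")
      case True
      have "b ** (P ** E) = (b ** P) ** E" by (simp add: matrix_mul_assoc)
      also have "\<dots> = mat l ** (P ** E)"
        using eigenprojector_eigen[OF m(2) l m(1)] by (simp add: P_def matrix_mul_assoc)
      finally show ?thesis using True by blast
    next
      case False
      then obtain c where c: "a ** E = mat c ** E" using a E(3) by auto
      have "a \<in> G" using a insert.prems by auto
      then have "a ** (P ** E) = (P ** a) ** E" using P by (simp add: matrix_mul_assoc)
      also have "\<dots> = mat c ** (P ** E)"
        using c by (simp add: matrix_mul_assoc[symmetric] mult_scalar_mat_left_commute)
      finally show ?thesis by blast
    qed
  qed
qed

lemma common_eigenvector: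
  fixes G :: "'n::finite cmatrix set"
  assumes "finite G" and "\<forall>a\<in>G. \<forall>b\<in>G. a ** b = b ** a"
    and "\<forall>a\<in>G. \<exists>m>0. matpow a m = mat 1"
  shows "\<exists>w. w \<noteq> 0 \<and> (\<forall>a\<in>G. \<exists>c. a *v w = c *s w)"
proof -
  obtain E :: "'n cmatrix" where E: "E \<noteq> 0" "\<forall>a\<in>G. \<exists>c. a ** E = mat c ** E"
    using common_eigenmatrix[OF assms(2,3,1) subset_refl] by blast
  obtain v where v: "E *v v \<noteq> 0" using E(1) unfolding matrix_eq_0_iff_mult_vec by blast
  have "\<exists>c. a *v (E *v v) = c *s (E *v v)" if a: "a \<in> G" for a
  proof -
    obtain c where c: "a ** E = mat c ** E" using E(2) a by blast
    have "a *v (E *v v) = (a ** E) *v v" by (simp only: matrix_vector_mul_assoc)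
    also have "\<dots> = mat c *v (E *v v)" by (simp only: c matrix_vector_mul_assoc)
    also have "\<dots> = c *s (E *v v)" by (rule scalar_mat_mult_vec)
    finally show ?thesis ..
  qed
  then show ?thesis using v by blast
qed

section \<open>Finite matrix groups with scalar commutators\<close>

definition matrix_group :: "'n::finite cmatrix set \<Rightarrow> bool" where
  "matrix_group S \<longleftrightarrow> mat 1 \<in> S \<and> (\<forall>a\<in>S. \<forall>b\<in>S. a ** b \<in> S) \<and>
     (\<forall>a\<in>S. invertible a \<and> matrix_inv a \<in> S)"

definition scalar_commutator_group :: "'n::finite cmatrix set \<Rightarrow> bool" where
  "scalar_commutator_group S \<longleftrightarrow> finite S \<and> matrix_group S \<and>
     (\<forall>a\<in>S. \<forall>b\<in>S. \<exists>c. a ** b = mat c ** (b ** a))"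

definition centraliser :: "'n::finite cmatrix set \<Rightarrow> 'n cmatrix \<Rightarrow> 'n cmatrix set" where
  "centraliser S x = {g\<in>S. x ** g = g ** x}"

definition centre :: "'n::finite cmatrix set \<Rightarrow> 'n cmatrix set" where
  "centre S = {a\<in>S. \<forall>b\<in>S. a ** b = b ** a}"

definition scale_mat :: "complex \<Rightarrow> 'n::finite cmatrix \<Rightarrow> 'n cmatrix" where
  "scale_mat c X = mat c ** X"

lemma scale_mat_mult_left [simp]: "scale_mat c X ** Y = scale_mat c (X ** Y)"
  unfolding scale_mat_def by (simp add: matrix_mul_assoc)

lemma scale_mat_mult_right [simp]: "X ** scale_mat c Y = scale_mat c (X ** Y)"
  unfolding scale_mat_def by (rule mult_scalar_mat_left_commute)

lemma scale_mat_scale_mat [simp]: "scale_mat c (scale_mat d X) = scale_mat (c * d) X"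
  unfolding scale_mat_def by (rule scalar_mat_mult_scalar_mat)

lemma scale_mat_1 [simp]: "scale_mat 1 X = X"
  unfolding scale_mat_def by simp

text \<open>Written \<open>\<kappa>(a, b)\<close> in comments; on lifts of elements of \<open>Z\<^sub>n(H)\<close> it is \<open>\<phi>\<^sub>H\<close>,
  see \<open>phiH_projn\<close>.\<close>

definition comm_scalar :: "'n::finite cmatrix \<Rightarrow> 'n cmatrix \<Rightarrow> complex" where
  "comm_scalar a b = (SOME c. a ** b = scale_mat c (b ** a))"

lemma matrix_groupD:
  assumes "matrix_group S"
  shows "mat 1 \<in> S" "\<And>a b. a \<in> S \<Longrightarrow> b \<in> S \<Longrightarrow> a ** b \<in> S"
    "\<And>a. a \<in> S \<Longrightarrow> invertible a" "\<And>a. a \<in> S \<Longrightarrow> matrix_inv a \<in> S"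
  using assms unfolding matrix_group_def by auto

lemma scalar_commutator_groupD:
  assumes "scalar_commutator_group S"
  shows "finite S" "matrix_group S"
    "\<And>a b. a \<in> S \<Longrightarrow> b \<in> S \<Longrightarrow> a ** b = scale_mat (comm_scalar a b) (b ** a)"
  using assms unfolding scalar_commutator_group_def comm_scalar_def scale_mat_def
  by (auto intro: someI_ex)

lemma matpow_in: "matrix_group S \<Longrightarrow> x \<in> S \<Longrightarrow> matpow x k \<in> S"
  by (induction k) (auto dest: matrix_groupD)

lemma matrix_group_finite_order:
  assumes S: "matrix_group S" "finite S" and x: "x \<in> S"
  shows "\<exists>e>0. matpow x e = mat 1"
proof -
  have "\<not> inj_on (matpow x) {..card S}"
  proof
    assume "inj_on (matpow x) {..card S}"
    moreover have "matpow x ` {..card S} \<subseteq> S" using matpow_in[OF S(1) x] by auto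
    ultimately have "card {..card S} \<le> card S" using card_inj_on_le S(2) by blast
    then show False by simp
  qed
  then obtain i j where ij: "i < j" "matpow x i = matpow x j"
    unfolding inj_on_def by (metis linorder_neqE_nat)
  then have "matpow x i ** matpow x (j - i) = matpow x i ** mat 1"
    using matpow_add[of x i "j - i"] by simp
  then have "matpow x (j - i) = mat 1"
    by (rule matrix_mult_left_cancel[OF matrix_groupD(3)[OF S(1) matpow_in[OF S(1) x]]])
  then show ?thesis using ij(1) by (intro exI[of _ "j - i"]) auto
qed

lemma centre_subset: "centre S \<subseteq> S"
  by (auto simp: centre_def)

lemma centre_eq_self_iff: "centre S = S \<longleftrightarrow> (\<forall>a\<in>S. \<forall>b\<in>S. a ** b = b ** a)"
proof
  assume eq: "centre S = S"
  show "\<forall>a\<in>S. \<forall>b\<in>S. a ** b = b ** a"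
  proof (intro ballI)
    fix a b assume "a \<in> S" "b \<in> S"
    then have "a \<in> centre S" using eq by simp
    then show "a ** b = b ** a" using \<open>b \<in> S\<close> unfolding centre_def by blast
  qed
qed (auto simp: centre_def)

lemma matrix_group_centre:
  assumes "matrix_group S"
  shows "matrix_group (centre S)"
  unfolding matrix_group_def
proof (intro conjI ballI)
  show "mat 1 \<in> centre S" using matrix_groupD(1)[OF assms] by (simp add: centre_def)
next
  fix a b assume a: "a \<in> centre S" and b: "b \<in> centre S"
  have "(a ** b) ** h = h ** (a ** b)" if h: "h \<in> S" for h
  proof -
    have "(a ** b) ** h = a ** (h ** b)"
      using b h unfolding centre_def by (simp add: matrix_mul_assoc[symmetric])
    also have "\<dots> = h ** (a ** b)"
      using a h unfolding centre_def by (simp add: matrix_mul_assoc)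
    finally show ?thesis .
  qed
  moreover have "a ** b \<in> S"
    using a b centre_subset matrix_groupD(2)[OF assms] by blast
  ultimately show "a ** b \<in> centre S" unfolding centre_def by blast
next
  fix a assume a: "a \<in> centre S"
  then have aS: "a \<in> S" by (simp add: centre_def)
  show "invertible a" using matrix_groupD(3)[OF assms aS] .
  have "h ** matrix_inv a = matrix_inv a ** h" if "h \<in> S" for h
    using a that matrix_inv_commute[OF matrix_groupD(3)[OF assms aS], of h]
    unfolding centre_def by force
  then show "matrix_inv a \<in> centre S"
    using matrix_groupD(4)[OF assms aS] unfolding centre_def by force
qed

lemma comm_scalar_unique:
  assumes S: "scalar_commutator_group S" and a: "a \<in> S" and b: "b \<in> S"
    and eq: "a ** b = scale_mat c (b ** a)"
  shows "comm_scalar a b = c"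
proof -
  have "invertible (b ** a)"
    using matrix_groupD(3)[OF scalar_commutator_groupD(2)[OF S]] a b by (simp add: invertible_mult)
  moreover have "scale_mat (comm_scalar a b) (b ** a) = scale_mat c (b ** a)"
    using scalar_commutator_groupD(3)[OF S a b] eq by simp
  ultimately show ?thesis unfolding scale_mat_def by (rule scalar_mat_mult_cancel)
qed

lemma comm_scalar_eq_1_iff:
  assumes "scalar_commutator_group S" "a \<in> S" "b \<in> S"
  shows "comm_scalar a b = 1 \<longleftrightarrow> a ** b = b ** a"
  using scalar_commutator_groupD(3)[OF assms] comm_scalar_unique[OF assms, of 1] by auto

lemma comm_scalar_mult_right:
  assumes S: "scalar_commutator_group S" and x: "x \<in> S" and g: "g \<in> S" and h: "h \<in> S"
  shows "comm_scalar x (g ** h) = comm_scalar x g * comm_scalar x h"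
proof (rule comm_scalar_unique[OF S x])
  note comm = scalar_commutator_groupD(3)[OF S]
  show "g ** h \<in> S" using matrix_groupD(2)[OF scalar_commutator_groupD(2)[OF S] g h] .
  have "x ** (g ** h) = scale_mat (comm_scalar x g) (g ** (x ** h))"
    using comm[OF x g] by (simp add: matrix_mul_assoc)
  also have "\<dots> = scale_mat (comm_scalar x g * comm_scalar x h) ((g ** h) ** x)"
    using comm[OF x h] by (simp add: matrix_mul_assoc)
  finally show "x ** (g ** h) = scale_mat (comm_scalar x g * comm_scalar x h) ((g ** h) ** x)" .
qed

lemma comm_scalar_mult_left:
  assumes S: "scalar_commutator_group S" and g: "g \<in> S" and h: "h \<in> S" and y: "y \<in> S"
  shows "comm_scalar (g ** h) y = comm_scalar g y * comm_scalar h y"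
proof (rule comm_scalar_unique[OF S _ y])
  note comm = scalar_commutator_groupD(3)[OF S]
  show "g ** h \<in> S" using matrix_groupD(2)[OF scalar_commutator_groupD(2)[OF S] g h] .
  have "(g ** h) ** y = scale_mat (comm_scalar h y) ((g ** y) ** h)"
    using comm[OF h y] by (simp add: matrix_mul_assoc[symmetric])
  also have "\<dots> = scale_mat (comm_scalar h y) (scale_mat (comm_scalar g y) (y ** g) ** h)"
    by (simp only: comm[OF g y])
  also have "\<dots> = scale_mat (comm_scalar g y * comm_scalar h y) (y ** (g ** h))"
    by (simp add: matrix_mul_assoc mult.commute)
  finally show "(g ** h) ** y = scale_mat (comm_scalar g y * comm_scalar h y) (y ** (g ** h))" .
qed

lemma comm_scalar_nonzero:
  assumes S: "scalar_commutator_group S" and "x \<in> S" "g \<in> S"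
  shows "comm_scalar x g \<noteq> 0"
proof
  note G = scalar_commutator_groupD(2)[OF S]
  assume "comm_scalar x g = 0"
  then have "x ** g = 0"
    using scalar_commutator_groupD(3)[OF S assms(2,3)] by (simp add: scale_mat_def)
  moreover have "invertible (x ** g)" using matrix_groupD(3)[OF G] assms by (simp add: invertible_mult)
  ultimately show False using matrix_inv_right[of "x ** g"] scalar_mat_neq_0 by force
qed

lemma comm_scalar_matpow_right:
  assumes S: "scalar_commutator_group S" and x: "x \<in> S" and y: "y \<in> S"
  shows "comm_scalar x (matpow y k) = comm_scalar x y ^ k"
proof (induction k)
  case 0
  show ?case using comm_scalar_eq_1_iff[OF S x] matrix_groupD(1)[OF scalar_commutator_groupD(2)[OF S]]
    by simp
next
  case (Suc k)
  then show ?case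
    using comm_scalar_mult_right[OF S x y matpow_in[OF scalar_commutator_groupD(2)[OF S] y]] by simp
qed

lemma comm_scalar_matpow_left:
  assumes S: "scalar_commutator_group S" and x: "x \<in> S" and y: "y \<in> S"
  shows "comm_scalar (matpow x k) y = comm_scalar x y ^ k"
proof (induction k)
  case 0
  show ?case using comm_scalar_eq_1_iff[OF S _ y] matrix_groupD(1)[OF scalar_commutator_groupD(2)[OF S]]
    by simp
next
  case (Suc k)
  then show ?case
    using comm_scalar_mult_left[OF S x matpow_in[OF scalar_commutator_groupD(2)[OF S] x] y] by simp
qed

lemma comm_scalar_inverse_right:
  assumes S: "scalar_commutator_group S" and x: "x \<in> S" and g: "g \<in> S"
  shows "comm_scalar x (matrix_inv g) = inverse (comm_scalar x g)"
proof -
  note G = scalar_commutator_groupD(2)[OF S]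
  have "comm_scalar x g * comm_scalar x (matrix_inv g) = comm_scalar x (g ** matrix_inv g)"
    using comm_scalar_mult_right[OF S x g matrix_groupD(4)[OF G g]] by simp
  also have "\<dots> = 1"
    using matrix_inv_right[OF matrix_groupD(3)[OF G g]] comm_scalar_eq_1_iff[OF S x] matrix_groupD(1)[OF G]
    by simp
  finally show ?thesis by (rule inverse_unique[symmetric])
qed

lemma commutator_eq_comm_scalar:
  assumes S: "scalar_commutator_group S" and x: "x \<in> S" and y: "y \<in> S"
  shows "x ** y ** matrix_inv x ** matrix_inv y = mat (comm_scalar x y)"
proof -
  note G = scalar_commutator_groupD(2)[OF S]
  have "x ** y ** matrix_inv x ** matrix_inv y
      = scale_mat (comm_scalar x y) (y ** (x ** matrix_inv x) ** matrix_inv y)"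
    using scalar_commutator_groupD(3)[OF S x y] by (simp add: matrix_mul_assoc)
  also have "\<dots> = scale_mat (comm_scalar x y) (mat 1)"
    using matrix_inv_right[OF matrix_groupD(3)[OF G x]] matrix_inv_right[OF matrix_groupD(3)[OF G y]]
    by simp
  finally show ?thesis by (simp add: scale_mat_def)
qed

lemma comm_scalar_scalar_mat_mult:
  assumes S: "scalar_commutator_group S" and g: "g \<in> S" and g': "g' \<in> S"
    and "mat c ** g \<in> S" "mat d ** g' \<in> S" "c \<noteq> 0" "d \<noteq> 0"
  shows "comm_scalar (mat c ** g) (mat d ** g') = comm_scalar g g'"
proof (rule comm_scalar_unique[OF S assms(4,5)])
  have "(mat c ** g) ** (mat d ** g') = scale_mat (c * d) (g ** g')"
    by (simp add: scale_mat_def[symmetric] mult.commute)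
  also have "\<dots> = scale_mat (comm_scalar g g') (scale_mat (c * d) (g' ** g))"
    using scalar_commutator_groupD(3)[OF S g g'] by (simp add: mult.commute)
  also have "scale_mat (c * d) (g' ** g) = (mat d ** g') ** (mat c ** g)"
    by (simp add: scale_mat_def[symmetric] mult.commute)
  finally show "(mat c ** g) ** (mat d ** g') = scale_mat (comm_scalar g g') ((mat d ** g') ** (mat c ** g))" .
qed

lemma comm_scalar_centre:
  assumes S: "scalar_commutator_group S" and a: "a \<in> centre S" and b: "b \<in> S"
  shows "comm_scalar a b = 1" "comm_scalar b a = 1"
  using a b comm_scalar_eq_1_iff[OF S] centre_subset unfolding centre_def by auto

lemma fibre_eq_translate_kernel:
  fixes f :: "'n::finite cmatrix \<Rightarrow> complex"
  assumes S: "matrix_group S" and g0: "g0 \<in> S"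
    and mult: "\<And>a b. a \<in> S \<Longrightarrow> b \<in> S \<Longrightarrow> f (a ** b) = f a * f b"
    and nz: "\<And>a. a \<in> S \<Longrightarrow> f a \<noteq> 0"
  shows "{g\<in>S. f g = f g0} = (\<lambda>k. g0 ** k) ` {g\<in>S. f g = 1}"
proof (intro equalityI subsetI)
  have i: "matrix_inv g0 \<in> S" and inv: "invertible g0" using S g0 by (auto dest: matrix_groupD)
  have "f (mat 1) = 1"
    using mult[OF matrix_groupD(1)[OF S] matrix_groupD(1)[OF S]] nz[OF matrix_groupD(1)[OF S]] by simp
  then have inv_g0: "f (matrix_inv g0) * f g0 = 1"
    using mult[OF i g0] matrix_inv_left[OF inv] by simp
  fix g assume "g \<in> {g\<in>S. f g = f g0}"
  then have "matrix_inv g0 ** g \<in> {g\<in>S. f g = 1}"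
    using mult[OF i] matrix_groupD(2)[OF S i] inv_g0 by auto
  moreover have "g = g0 ** (matrix_inv g0 ** g)"
    using matrix_inv_right[OF inv] by (simp add: matrix_mul_assoc)
  ultimately show "g \<in> (\<lambda>k. g0 ** k) ` {g\<in>S. f g = 1}" by blast
next
  fix g assume "g \<in> (\<lambda>k. g0 ** k) ` {g\<in>S. f g = 1}"
  then show "g \<in> {g\<in>S. f g = f g0}" using mult[OF g0] matrix_groupD(2)[OF S g0] by auto
qed

lemma card_matrix_group_kernel:
  fixes f :: "'n::finite cmatrix \<Rightarrow> complex"
  assumes S: "matrix_group S" "finite S"
    and mult: "\<And>a b. a \<in> S \<Longrightarrow> b \<in> S \<Longrightarrow> f (a ** b) = f a * f b"
    and nz: "\<And>a. a \<in> S \<Longrightarrow> f a \<noteq> 0"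
  shows "card S = card (f ` S) * card {g\<in>S. f g = 1}"
proof -
  have fibre: "card {g\<in>S. f g = f g0} = card {g\<in>S. f g = 1}" if g0: "g0 \<in> S" for g0
  proof -
    have "inj_on (\<lambda>k. g0 ** k) {g\<in>S. f g = 1}"
      by (rule inj_onI) (rule matrix_mult_left_cancel[OF matrix_groupD(3)[OF S(1) g0]])
    then show ?thesis using fibre_eq_translate_kernel[OF S(1) g0 mult nz] by (simp add: card_image)
  qed
  have "S = (\<Union>v\<in>f ` S. {g\<in>S. f g = v})" by blast
  also have "card \<dots> = (\<Sum>v\<in>f ` S. card {g\<in>S. f g = v})"
    by (rule card_UN_disjoint) (use S(2) in auto)
  also have "\<dots> = (\<Sum>v\<in>f ` S. card {g\<in>S. f g = 1})" using fibre by (intro sum.cong) auto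
  finally show ?thesis by simp
qed

lemma prime_root_of_unity_power_eq_1_iff:
  fixes w :: complex
  assumes p: "prime p" and wp: "w ^ p = 1" and w1: "w \<noteq> 1"
  shows "w ^ k = 1 \<longleftrightarrow> p dvd k"
proof
  assume "p dvd k" then show "w ^ k = 1" using wp by (auto simp: power_mult elim!: dvdE)
next
  assume wk: "w ^ k = 1"
  show "p dvd k"
  proof (rule ccontr)
    assume nd: "\<not> p dvd k"
    then have "k \<noteq> 0" by (metis dvd_0_right)
    moreover have "coprime p k" using p nd by (simp add: prime_imp_coprime)
    then have "gcd k p = 1" by (simp add: coprime_iff_gcd_eq_1 gcd.commute)
    ultimately obtain u v where "k * u = p * v + 1" using bezout_nat[of k p] by auto
    then have "w ^ (k * u) = w" using wp by (simp add: power_add power_mult)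
    then show False using wk w1 by (simp add: power_mult)
  qed
qed

lemma prime_roots_of_unity_powers:
  fixes w :: complex
  assumes p: "prime p" and wp: "w ^ p = 1" and w1: "w \<noteq> 1"
  shows "{z. z ^ p = 1} = (\<lambda>i. w ^ i) ` {..<p}" "inj_on (\<lambda>i. w ^ i) {..<p}"
proof -
  have p0: "0 < p" using p by (simp add: prime_gt_0_nat)
  have w0: "w \<noteq> 0" using wp p0 by (auto simp: zero_power)
  have neq: "w ^ i \<noteq> w ^ j" if "i < j" "j < p" for i j
  proof
    assume "w ^ i = w ^ j"
    moreover have "w ^ j = w ^ i * w ^ (j - i)" using that by (simp add: power_add[symmetric])
    ultimately have "w ^ (j - i) = 1" using w0 by simp
    then show False
      using prime_root_of_unity_power_eq_1_iff[OF p wp w1] that by (auto dest: dvd_imp_le)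
  qed
  show inj: "inj_on (\<lambda>i. w ^ i) {..<p}"
  proof (rule inj_onI)
    fix i j assume "i \<in> {..<p}" "j \<in> {..<p}" "w ^ i = w ^ j"
    then show "i = j" using neq[of i j] neq[of j i] by (cases i j rule: linorder_cases) auto
  qed
  have sub: "(\<lambda>i. w ^ i) ` {..<p} \<subseteq> {z. z ^ p = 1}"
    using wp by (auto simp: power_mult[symmetric] mult.commute[of _ p] power_mult)
  have "card ((\<lambda>i. w ^ i) ` {..<p}) = card {z::complex. z ^ p = 1}"
    using card_image[OF inj] card_roots_unity_eq[OF p0] by simp
  moreover have "finite {z::complex. z ^ p = 1}" using finite_roots_unity[of p] p0 by simp
  ultimately show "{z. z ^ p = 1} = (\<lambda>i. w ^ i) ` {..<p}"
    using card_subset_eq[OF _ sub] by simp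
qed

lemma exists_prime_power_in_centre:
  assumes S: "matrix_group S" "finite S" and nc: "centre S \<noteq> S"
  shows "\<exists>x p. x \<in> S \<and> x \<notin> centre S \<and> prime p \<and> matpow x p \<in> centre S"
proof -
  obtain x0 where x0: "x0 \<in> S" "x0 \<notin> centre S" using nc centre_subset by blast
  obtain e where e: "e > 0" "matpow x0 e = mat 1" using matrix_group_finite_order[OF S x0(1)] by blast
  define P where "P k \<longleftrightarrow> 0 < k \<and> matpow x0 k \<in> centre S" for k
  have "P e" using e matrix_groupD(1)[OF matrix_group_centre[OF S(1)]] by (simp add: P_def)
  define e0 where "e0 = (LEAST k. P k)"
  have Pe0: "P e0" unfolding e0_def by (rule LeastI) fact
  have min: "\<not> P k" if "k < e0" for k using not_less_Least[of k P] that unfolding e0_def by blast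
  have "e0 \<noteq> 1" using Pe0 x0(2) by (auto simp: P_def)
  then obtain p where p: "prime p" "p dvd e0" using prime_factor_nat by blast
  have e0: "0 < e0" using Pe0 by (simp add: P_def)
  have "1 < p" using prime_gt_1_nat[OF p(1)] .
  then have "0 < e0 div p" "e0 div p < e0" using p(2) e0 by (auto simp: dvd_imp_le div_greater_zero_iff)
  then have "matpow x0 (e0 div p) \<notin> centre S" using min[of "e0 div p"] by (simp add: P_def)
  moreover have "matpow (matpow x0 (e0 div p)) p \<in> centre S"
    using p(2) Pe0 by (simp add: P_def matpow_mult[symmetric])
  ultimately show ?thesis using p(1) matpow_in[OF S(1) x0(1)] by blast
qed

lemma scalar_commutator_group_centraliser:
  assumes S: "scalar_commutator_group S" and x: "x \<in> S"
  shows "scalar_commutator_group (centraliser S x)"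
proof -
  note G = scalar_commutator_groupD(2)[OF S]
  have sub: "centraliser S x \<subseteq> S" by (auto simp: centraliser_def)
  have "matrix_group (centraliser S x)"
    unfolding matrix_group_def
  proof (intro conjI ballI)
    show "mat 1 \<in> centraliser S x" using matrix_groupD(1)[OF G] by (simp add: centraliser_def)
  next
    fix a b assume a: "a \<in> centraliser S x" and b: "b \<in> centraliser S x"
    have "x ** (a ** b) = (x ** a) ** b" by (simp add: matrix_mul_assoc)
    also have "\<dots> = a ** (x ** b)" using a by (simp add: centraliser_def matrix_mul_assoc)
    also have "\<dots> = (a ** b) ** x" using b by (simp add: centraliser_def matrix_mul_assoc)
    finally show "a ** b \<in> centraliser S x"
      using a b matrix_groupD(2)[OF G] by (simp add: centraliser_def)
  next
    fix a assume a: "a \<in> centraliser S x"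
    then have aS: "a \<in> S" using sub by blast
    show "invertible a" using matrix_groupD(3)[OF G aS] .
    show "matrix_inv a \<in> centraliser S x"
      using a matrix_inv_commute[OF matrix_groupD(3)[OF G aS], of x] matrix_groupD(4)[OF G aS]
      by (simp add: centraliser_def)
  qed
  moreover have "finite (centraliser S x)"
    using scalar_commutator_groupD(1)[OF S] sub finite_subset by blast
  moreover have "\<forall>a\<in>centraliser S x. \<forall>b\<in>centraliser S x. \<exists>c. a ** b = mat c ** (b ** a)"
    using S sub unfolding scalar_commutator_group_def by blast
  ultimately show ?thesis unfolding scalar_commutator_group_def by blast
qed

text \<open>The inductive step towards a Lagrangian: if \<open>x\<close> is non-central with central \<open>p\<close>-th power,
  then \<open>\<kappa>(x, -)\<close> maps \<open>S\<close> onto the \<open>p\<close>-th roots of unity with kernel the centraliser \<open>S\<^sub>1\<close>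
  of \<open>x\<close>, and \<open>\<kappa>(-, y)\<close> maps the centre of \<open>S\<^sub>1\<close> onto them with kernel the centre of \<open>S\<close>.
  Hence \<open>|S\<^sub>1| |Z(S\<^sub>1)| = |S| |Z(S)|\<close>.\<close>

context
  fixes S :: "'n::finite cmatrix set" and x y :: "'n cmatrix" and p :: nat
  assumes S: "scalar_commutator_group S" and x: "x \<in> S" and y: "y \<in> S"
    and p: "prime p" and xp: "matpow x p \<in> centre S" and xy: "x ** y \<noteq> y ** x"
begin

lemma comm_scalar_power_prime: "g \<in> S \<Longrightarrow> comm_scalar x g ^ p = 1"
  using comm_scalar_matpow_left[OF S x, of g p] comm_scalar_centre(1)[OF S xp] by simp

lemma roots_eq_powers_comm_scalar: "{z. z ^ p = 1} = (\<lambda>i. comm_scalar x y ^ i) ` {..<p}"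
  using prime_roots_of_unity_powers(1)[OF p comm_scalar_power_prime[OF y]]
    comm_scalar_eq_1_iff[OF S x y] xy by simp

lemma image_comm_scalar_left: "comm_scalar x ` S = {z. z ^ p = 1}"
proof
  show "comm_scalar x ` S \<subseteq> {z. z ^ p = 1}" using comm_scalar_power_prime by auto
  show "{z. z ^ p = 1} \<subseteq> comm_scalar x ` S"
  proof
    fix z :: complex assume "z \<in> {z. z ^ p = 1}"
    then obtain i where "z = comm_scalar x y ^ i" using roots_eq_powers_comm_scalar by auto
    then have "z = comm_scalar x (matpow y i)" using comm_scalar_matpow_right[OF S x y] by simp
    then show "z \<in> comm_scalar x ` S" using matpow_in[OF scalar_commutator_groupD(2)[OF S] y] by blast
  qed
qed

lemma card_eq_prime_times_card_centraliser: "card S = p * card (centraliser S x)"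
proof -
  note G = scalar_commutator_groupD(2)[OF S]
  have "centraliser S x = {g\<in>S. comm_scalar x g = 1}"
    using comm_scalar_eq_1_iff[OF S x] by (auto simp: centraliser_def)
  moreover have "card (comm_scalar x ` S) = p"
    using image_comm_scalar_left card_roots_unity_eq p by (simp add: prime_gt_0_nat)
  ultimately show ?thesis
    using card_matrix_group_kernel[OF G scalar_commutator_groupD(1)[OF S], of "comm_scalar x"]
      comm_scalar_mult_right[OF S x] comm_scalar_nonzero[OF S x] by simp
qed

lemma centraliser_subset: "centraliser S x \<subseteq> S"
  by (auto simp: centraliser_def)

lemma matpow_in_centre_centraliser: "matpow x i \<in> centre (centraliser S x)"
proof -
  have "x \<in> centre (centraliser S x)" using x by (auto simp: centre_def centraliser_def)
  then show ?thesis
    using matpow_in[OF matrix_group_centre[OF scalar_commutator_groupD(2)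
          [OF scalar_commutator_group_centraliser[OF S x]]]] by blast
qed

lemma image_comm_scalar_right: "(\<lambda>g. comm_scalar g y) ` centre (centraliser S x) = {z. z ^ p = 1}"
proof
  note S1 = scalar_commutator_group_centraliser[OF S x]
  have yp: "matpow y p \<in> centraliser S x"
    using comm_scalar_matpow_right[OF S x y, of p] comm_scalar_power_prime[OF y]
      comm_scalar_eq_1_iff[OF S x] matpow_in[OF scalar_commutator_groupD(2)[OF S] y]
    by (simp add: centraliser_def)
  show "(\<lambda>g. comm_scalar g y) ` centre (centraliser S x) \<subseteq> {z. z ^ p = 1}"
  proof clarify
    fix g assume g: "g \<in> centre (centraliser S x)"
    then have "g \<in> S" using centre_subset centraliser_subset by blast
    then show "comm_scalar g y ^ p = 1"
      using comm_scalar_matpow_right[OF S _ y, of g p] comm_scalar_centre(1)[OF S1 g yp] by simp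
  qed
  show "{z. z ^ p = 1} \<subseteq> (\<lambda>g. comm_scalar g y) ` centre (centraliser S x)"
  proof
    fix z :: complex assume "z \<in> {z. z ^ p = 1}"
    then obtain i where "z = comm_scalar x y ^ i" using roots_eq_powers_comm_scalar by auto
    then have "z = comm_scalar (matpow x i) y" using comm_scalar_matpow_left[OF S x y] by simp
    then show "z \<in> (\<lambda>g. comm_scalar g y) ` centre (centraliser S x)"
      using matpow_in_centre_centraliser by blast
  qed
qed

lemma centre_eq_kernel_comm_scalar_right:
  "centre S = {g\<in>centre (centraliser S x). comm_scalar g y = 1}"
proof (intro equalityI subsetI)
  note G = scalar_commutator_groupD(2)[OF S]
  fix g assume g: "g \<in> centre S"
  then have "g \<in> centraliser S x" using x unfolding centre_def centraliser_def by force
  then have "g \<in> centre (centraliser S x)"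
    using g centraliser_subset unfolding centre_def by blast
  then show "g \<in> {g\<in>centre (centraliser S x). comm_scalar g y = 1}"
    using comm_scalar_centre(1)[OF S g y] by simp
next
  note G = scalar_commutator_groupD(2)[OF S]
  fix g assume "g \<in> {g\<in>centre (centraliser S x). comm_scalar g y = 1}"
  then have g: "g \<in> centre (centraliser S x)" and gy: "comm_scalar g y = 1" by auto
  have gS: "g \<in> S" using g centre_subset centraliser_subset by blast
  have "comm_scalar g h = 1" if h: "h \<in> S" for h
  proof -
    obtain j where "comm_scalar x h = comm_scalar x y ^ j"
      using image_comm_scalar_left roots_eq_powers_comm_scalar h by blast
    then have "comm_scalar x h = comm_scalar x (matpow y j)"
      using comm_scalar_matpow_right[OF S x y] by simp
    define s where "s = matrix_inv (matpow y j) ** h"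
    have yj: "matpow y j \<in> S" using matpow_in[OF G y] .
    have s: "s \<in> S" unfolding s_def using matrix_groupD(2,4)[OF G] yj h by blast
    have "comm_scalar x s = 1"
      unfolding s_def using comm_scalar_mult_right[OF S x matrix_groupD(4)[OF G yj] h]
        comm_scalar_inverse_right[OF S x yj] \<open>comm_scalar x h = comm_scalar x (matpow y j)\<close>
        comm_scalar_nonzero[OF S x yj] by simp
    then have "s \<in> centraliser S x" using comm_scalar_eq_1_iff[OF S x s] s by (simp add: centraliser_def)
    then have "comm_scalar g s = 1"
      using comm_scalar_centre(1)[OF scalar_commutator_group_centraliser[OF S x] g] by blast
    moreover have "h = matpow y j ** s"
      unfolding s_def using matrix_inv_right[OF matrix_groupD(3)[OF G yj]] by (simp add: matrix_mul_assoc)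
    ultimately show ?thesis
      using comm_scalar_mult_right[OF S gS yj s] comm_scalar_matpow_right[OF S gS y] gy by simp
  qed
  then show "g \<in> centre S" using comm_scalar_eq_1_iff[OF S gS] gS unfolding centre_def by blast
qed

lemma card_centre_centraliser: "card (centre (centraliser S x)) = p * card (centre S)"
proof -
  note S1 = scalar_commutator_group_centraliser[OF S x]
  have sub: "centre (centraliser S x) \<subseteq> S" using centre_subset centraliser_subset by blast
  have "card ((\<lambda>g. comm_scalar g y) ` centre (centraliser S x)) = p"
    using image_comm_scalar_right card_roots_unity_eq p by (simp add: prime_gt_0_nat)
  moreover have "finite (centre (centraliser S x))"
    using sub scalar_commutator_groupD(1)[OF S] finite_subset by blast
  ultimately show ?thesis
    using card_matrix_group_kernel[OF matrix_group_centre[OF scalar_commutator_groupD(2)[OF S1]],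
        of "\<lambda>g. comm_scalar g y"] centre_eq_kernel_comm_scalar_right
      comm_scalar_mult_left[OF S _ _ y] comm_scalar_nonzero[OF S _ y] sub
    by (simp add: subset_iff)
qed

end

lemma exists_smaller_scalar_commutator_group:
  assumes S: "scalar_commutator_group S" and nc: "centre S \<noteq> S"
  shows "\<exists>S1 \<subseteq> S. scalar_commutator_group S1 \<and> card S1 < card S \<and>
    card S1 * card (centre S1) = card S * card (centre S) \<and> centre S \<subseteq> centre S1"
proof -
  note G = scalar_commutator_groupD(2)[OF S]
  obtain x p where x: "x \<in> S" "x \<notin> centre S" and p: "prime p" and xp: "matpow x p \<in> centre S"
    using exists_prime_power_in_centre[OF G scalar_commutator_groupD(1)[OF S] nc] by blast
  obtain y where y: "y \<in> S" "x ** y \<noteq> y ** x" using x unfolding centre_def by blast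
  note facts = S x(1) y(1) p xp y(2)
  have "0 < card (centraliser S x)"
    using scalar_commutator_groupD(1)[OF scalar_commutator_group_centraliser[OF S x(1)]]
      matrix_groupD(1)[OF scalar_commutator_groupD(2)[OF scalar_commutator_group_centraliser[OF S x(1)]]]
    by (auto simp: card_gt_0_iff)
  moreover have "1 < p" using prime_gt_1_nat[OF p] .
  ultimately have "card (centraliser S x) < card S"
    using card_eq_prime_times_card_centraliser[OF facts] by simp
  then show ?thesis
    using centraliser_subset[OF facts] scalar_commutator_group_centraliser[OF S x(1)]
      card_eq_prime_times_card_centraliser[OF facts] card_centre_centraliser[OF facts]
      centre_eq_kernel_comm_scalar_right[OF facts]
    by (intro exI[of _ "centraliser S x"]) auto
qed

lemma exists_lagrangian_subgroup:
  assumes "scalar_commutator_group S"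
  shows "\<exists>L. centre S \<subseteq> L \<and> L \<subseteq> S \<and> scalar_commutator_group L \<and> centre L = L \<and>
    card L ^ 2 = card S * card (centre S)"
  using assms
proof (induction "card S" arbitrary: S rule: less_induct)
  case less
  show ?case
  proof (cases "centre S = S")
    case True
    then show ?thesis using less.prems by (intro exI[of _ S]) (simp add: power2_eq_square)
  next
    case False
    obtain S1 where S1: "S1 \<subseteq> S" "scalar_commutator_group S1" "card S1 < card S"
      "card S1 * card (centre S1) = card S * card (centre S)" "centre S \<subseteq> centre S1"
      using exists_smaller_scalar_commutator_group[OF less.prems False] by blast
    obtain L where "centre S1 \<subseteq> L" "L \<subseteq> S1" "scalar_commutator_group L" "centre L = L"
      "card L ^ 2 = card S1 * card (centre S1)"
      using less.hyps[OF S1(3) S1(2)] by blast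
    then show ?thesis using S1 by (intro exI[of _ L]) auto
  qed
qed

section \<open>Characters of abelian matrix groups\<close>

lemma exists_character:
  fixes L :: "'n::finite cmatrix set"
  assumes L: "matrix_group L" "finite L" and comm: "\<forall>a\<in>L. \<forall>b\<in>L. a ** b = b ** a"
  shows "\<exists>\<psi>. (\<forall>a\<in>L. \<forall>b\<in>L. \<psi> (a ** b) = \<psi> a * \<psi> b) \<and> (\<forall>a\<in>L. \<psi> a \<noteq> 0) \<and>
    (\<forall>c. mat c \<in> L \<longrightarrow> \<psi> (mat c) = c)"
proof -
  obtain w where w: "w \<noteq> 0" "\<forall>a\<in>L. \<exists>c. a *v w = c *s w"
    using common_eigenvector[OF L(2) comm] matrix_group_finite_order[OF L] by blast
  define \<psi> where "\<psi> a = (SOME c. a *v w = c *s w)" for a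
  have \<psi>: "a *v w = \<psi> a *s w" if "a \<in> L" for a
    unfolding \<psi>_def using w(2) that by (metis (mono_tags, lifting) someI_ex)
  have \<psi>_unique: "\<psi> a = c" if "a \<in> L" "a *v w = c *s w" for a c
    using \<psi>[OF that(1)] that(2) w(1) by simp
  show ?thesis
  proof (intro exI[of _ \<psi>] conjI ballI allI impI)
    fix a b assume a: "a \<in> L" and b: "b \<in> L"
    have "(a ** b) *v w = \<psi> b *s (\<psi> a *s w)"
      using \<psi>[OF a] \<psi>[OF b] by (simp add: matrix_vector_mul_assoc[symmetric] vec.scale)
    then show "\<psi> (a ** b) = \<psi> a * \<psi> b"
      using \<psi>_unique matrix_groupD(2)[OF L(1) a b] by (simp add: vector_smult_assoc mult.commute)
  next
    fix a assume a: "a \<in> L"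
    show "\<psi> a \<noteq> 0"
    proof
      assume "\<psi> a = 0"
      then have "(matrix_inv a ** a) *v w = 0"
        using \<psi>[OF a] by (simp add: matrix_vector_mul_assoc[symmetric])
      then show False using matrix_inv_left[OF matrix_groupD(3)[OF L(1) a]] w(1) by simp
    qed
  next
    fix c assume "mat c \<in> L"
    then show "\<psi> (mat c) = c" using \<psi>_unique by (simp add: scalar_mat_mult_vec)
  qed
qed

lemma character_sum_idempotent:
  fixes L :: "'n::finite cmatrix set" and \<psi> :: "'n cmatrix \<Rightarrow> complex"
  assumes L: "matrix_group L" "finite L"
    and mult: "\<forall>a\<in>L. \<forall>b\<in>L. \<psi> (a ** b) = \<psi> a * \<psi> b"
  defines "P \<equiv> \<Sum>a\<in>L. mat (inverse (\<psi> a)) ** a"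
  shows "P ** P = mat (of_nat (card L)) ** P"
proof -
  have "P ** P = (\<Sum>a\<in>L. \<Sum>b\<in>L. scale_mat (inverse (\<psi> (a ** b))) (a ** b))"
    unfolding P_def scale_mat_def[symmetric] sum_matrix_mult[OF L(2)] matrix_mult_sum[OF L(2)]
    using mult by (subst sum.swap) (auto intro!: sum.cong simp: mult.commute)
  also have "\<dots> = (\<Sum>a\<in>L. P)"
  proof (rule sum.cong[OF refl])
    fix a assume a: "a \<in> L"
    have ia: "invertible a" using matrix_groupD(3)[OF L(1) a] .
    have "(\<Sum>b\<in>L. scale_mat (inverse (\<psi> (a ** b))) (a ** b)) = (\<Sum>c\<in>L. scale_mat (inverse (\<psi> c)) c)"
    proof (rule sum.reindex_bij_witness[where j="\<lambda>b. a ** b" and i="\<lambda>c. matrix_inv a ** c"])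
      fix b assume "b \<in> L" then show "matrix_inv a ** (a ** b) = b"
        using matrix_inv_left[OF ia] by (simp add: matrix_mul_assoc)
    next
      fix b assume "b \<in> L" then show "a ** b \<in> L" using matrix_groupD(2)[OF L(1) a] by simp
    next
      fix c assume "c \<in> L" then show "a ** (matrix_inv a ** c) = c"
        using matrix_inv_right[OF ia] by (simp add: matrix_mul_assoc)
    next
      fix c assume "c \<in> L" then show "matrix_inv a ** c \<in> L"
        using matrix_groupD(2)[OF L(1) matrix_groupD(4)[OF L(1) a]] by simp
    qed simp
    then show "(\<Sum>b\<in>L. scale_mat (inverse (\<psi> (a ** b))) (a ** b)) = P"
      unfolding P_def scale_mat_def by simp
  qed
  also have "\<dots> = mat (of_nat (card L)) ** P"
    using sum_scalar_mat_mult[OF L(2), of "\<lambda>_. 1" P] by simp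
  finally show ?thesis .
qed

lemma trace_character_sum:
  fixes L :: "'n::finite cmatrix set"
  assumes L: "finite L"
    and traceless: "\<forall>a\<in>L. (\<forall>c. a \<noteq> mat c) \<longrightarrow> trace a = 0"
    and scalar: "\<forall>c. mat c \<in> L \<longrightarrow> \<psi> (mat c) = c" and nz: "\<forall>a\<in>L. \<psi> a \<noteq> 0"
  shows "trace (\<Sum>a\<in>L. mat (inverse (\<psi> a)) ** a) = of_nat (CARD('n) * card {c. mat c \<in> L})"
proof -
  define C where "C = {c. mat c \<in> L}"
  have "trace (\<Sum>a\<in>L. mat (inverse (\<psi> a)) ** a) = (\<Sum>a\<in>L. inverse (\<psi> a) * trace a)"
    by (simp add: trace_sum[OF L] trace_scalar_mat_mult)
  also have "\<dots> = (\<Sum>a\<in>mat ` C. inverse (\<psi> a) * trace a)"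
    using traceless unfolding C_def by (intro sum.mono_neutral_right[OF L]) auto
  also have "\<dots> = (\<Sum>c\<in>C. inverse (\<psi> (mat c)) * trace (mat c :: 'n cmatrix))"
    by (subst sum.reindex) (auto simp: inj_on_def)
  also have "\<dots> = (\<Sum>c\<in>C. of_nat CARD('n))"
  proof (rule sum.cong[OF refl])
    fix c assume "c \<in> C"
    then have "\<psi> (mat c) = c" "c \<noteq> 0" using scalar nz unfolding C_def by auto
    then show "inverse (\<psi> (mat c)) * trace (mat c :: 'n cmatrix) = of_nat CARD('n)"
      by (simp add: trace_scalar_mat)
  qed
  finally show ?thesis unfolding C_def by simp
qed

text \<open>The trace of the idempotent \<open>|L|\<^sup>-\<^sup>1 \<Sum>\<^sub>a \<psi>(a)\<^sup>-\<^sup>1 a\<close> is the natural number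
  \<open>n |L \<inter> scalars| / |L|\<close>.\<close>

lemma card_dvd_if_traceless:
  fixes L :: "'n::finite cmatrix set"
  assumes L: "matrix_group L" "finite L" and comm: "\<forall>a\<in>L. \<forall>b\<in>L. a ** b = b ** a"
    and traceless: "\<forall>a\<in>L. (\<forall>c. a \<noteq> mat c) \<longrightarrow> trace a = 0"
  shows "card L dvd CARD('n) * card {c. mat c \<in> L}"
proof -
  obtain \<psi> where mult: "\<forall>a\<in>L. \<forall>b\<in>L. \<psi> (a ** b) = \<psi> a * \<psi> b" and nz: "\<forall>a\<in>L. \<psi> a \<noteq> 0"
    and scalar: "\<forall>c. mat c \<in> L \<longrightarrow> \<psi> (mat c) = c"
    using exists_character[OF L comm] by blast
  define P where "P = (\<Sum>a\<in>L. mat (inverse (\<psi> a)) ** a)"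
  define N where "N = card L"
  have N: "0 < N" unfolding N_def using L matrix_groupD(1) card_gt_0_iff by blast
  define Q where "Q = scale_mat (inverse (of_nat N)) P"
  have "Q ** Q = scale_mat (inverse (of_nat N) * inverse (of_nat N)) (P ** P)"
    unfolding Q_def by simp
  also have "\<dots> = scale_mat (inverse (of_nat N) * inverse (of_nat N) * of_nat N) P"
    using character_sum_idempotent[OF L mult] unfolding P_def[symmetric] N_def[symmetric]
    by (simp add: scale_mat_def[symmetric])
  also have "inverse (of_nat N) * inverse (of_nat N) * of_nat N = (inverse (of_nat N) :: complex)"
    using N by (simp add: field_simps)
  finally have "Q ** Q = Q" unfolding Q_def .
  then obtain k where "trace Q = of_nat k" using trace_idempotent by blast
  then have "of_nat (N * k) = (of_nat (CARD('n) * card {c. mat c \<in> L}) :: complex)"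
    using trace_character_sum[OF L(2) traceless scalar nz] N
    unfolding Q_def P_def scale_mat_def by (simp add: trace_scalar_mat_mult field_simps)
  then have "N * k = CARD('n) * card {c. mat c \<in> L}" by (simp only: of_nat_eq_iff)
  then show ?thesis unfolding N_def by (metis dvd_triv_left)
qed

section \<open>Lifts of the centraliser of \<open>\<pi>\<^sub>n(H)\<close>\<close>

lemma root_of_unity_nonzero: "(c::complex) ^ CARD('n::finite) = 1 \<Longrightarrow> c \<noteq> 0"
  by (metis zero_neq_one zero_power zero_less_card_finite)

lemma mem_SLn_iff: "g \<in> SLn \<longleftrightarrow> det (g::'n::finite cmatrix) = 1"
  by (simp add: SLn_def)

lemma invertible_if_SLn: "g \<in> SLn \<Longrightarrow> invertible (g::'n::finite cmatrix)"
  by (simp add: mem_SLn_iff invertible_det_nz)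

lemma mem_projn_iff: "x \<in> projn g \<longleftrightarrow> (\<exists>c. c ^ CARD('n) = 1 \<and> x = mat c ** (g::'n::finite cmatrix))"
  unfolding projn_def by blast

lemma mem_projn_self: "(g::'n::finite cmatrix) \<in> projn g"
  unfolding mem_projn_iff by (intro exI[of _ 1]) simp

lemma projn_scalar_mat_mult:
  assumes c: "c ^ CARD('n) = 1"
  shows "projn (mat c ** g) = projn (g::'n::finite cmatrix)"
proof (intro equalityI subsetI)
  fix x assume "x \<in> projn (mat c ** g)"
  then obtain d where d: "d ^ CARD('n) = 1" "x = mat (d * c) ** g"
    unfolding mem_projn_iff by (auto simp: scalar_mat_mult_scalar_mat)
  moreover have "(d * c) ^ CARD('n) = 1" using c d by (simp add: power_mult_distrib)
  ultimately show "x \<in> projn g" unfolding mem_projn_iff by blast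
next
  fix x assume "x \<in> projn g"
  then obtain d where d: "d ^ CARD('n) = 1" "x = mat d ** g" unfolding mem_projn_iff by blast
  then have "x = mat (d / c) ** (mat c ** g)"
    using root_of_unity_nonzero[OF c] by (simp add: scalar_mat_mult_scalar_mat)
  moreover have "(d / c) ^ CARD('n) = 1" using c d by (simp add: power_divide)
  ultimately show "x \<in> projn (mat c ** g)" unfolding mem_projn_iff by blast
qed

lemma projn_eq_if_mem: "x \<in> projn g \<Longrightarrow> projn x = projn (g::'n::finite cmatrix)"
  using projn_scalar_mat_mult unfolding mem_projn_iff by blast

lemma cosetmul_projn: "cosetmul (projn a) (projn b) = projn (a ** (b::'n::finite cmatrix))"
proof (intro equalityI subsetI)
  fix z assume "z \<in> cosetmul (projn a) (projn b)"
  then obtain c d where c: "c ^ CARD('n) = 1" and d: "d ^ CARD('n) = 1"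
    and "z = scale_mat c a ** scale_mat d b"
    unfolding cosetmul_def mem_projn_iff scale_mat_def by blast
  then have "z = scale_mat (c * d) (a ** b)" by (simp add: mult.commute)
  then have "z = mat (c * d) ** (a ** b)" unfolding scale_mat_def .
  moreover have "(c * d) ^ CARD('n) = 1" using c d by (simp add: power_mult_distrib)
  ultimately show "z \<in> projn (a ** b)" unfolding mem_projn_iff by blast
next
  fix z assume "z \<in> projn (a ** b)"
  then obtain c where c: "c ^ CARD('n) = 1" "z = (mat c ** a) ** b"
    unfolding mem_projn_iff by (auto simp: matrix_mul_assoc)
  then show "z \<in> cosetmul (projn a) (projn b)"
    unfolding cosetmul_def using mem_projn_self mem_projn_iff by blast
qed

lemma
  assumes "invertible (g::'n::finite cmatrix)"
  shows card_projn: "card (projn g) = CARD('n)" and finite_projn: "finite (projn g)"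
proof -
  have eq: "projn g = (\<lambda>c. mat c ** g) ` {c. c ^ CARD('n) = 1}" unfolding projn_def by blast
  have inj: "inj_on (\<lambda>c. mat c ** g) {c. c ^ CARD('n) = 1}"
    by (rule inj_onI) (rule scalar_mat_mult_cancel[OF assms])
  show "card (projn g) = CARD('n)"
    unfolding eq card_image[OF inj] using card_roots_unity_eq[of "CARD('n)"] by simp
  show "finite (projn g)"
    unfolding eq by (rule finite_imageI) (use finite_roots_unity[of "CARD('n)"] in simp)
qed

lemma card_eq_card_projn_image:
  fixes T :: "'n::finite cmatrix set"
  assumes inv: "\<And>g. g \<in> T \<Longrightarrow> invertible g"
    and sat: "\<And>g c. g \<in> T \<Longrightarrow> c ^ CARD('n) = 1 \<Longrightarrow> mat c ** g \<in> T"
  shows "card T = CARD('n) * card (projn ` T)"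
proof -
  have "\<Union> (projn ` T) = T"
  proof (intro equalityI subsetI)
    fix x assume "x \<in> \<Union> (projn ` T)"
    then obtain g where "g \<in> T" "x \<in> projn g" by blast
    moreover from this(2) obtain c where "c ^ CARD('n) = 1" "x = mat c ** g"
      unfolding mem_projn_iff by blast
    ultimately show "x \<in> T" using sat by simp
  qed (use mem_projn_self in blast)
  then have "card T = card (\<Union> (projn ` T))" by simp
  also have "\<dots> = sum card (projn ` T)"
  proof (rule card_Union_disjoint)
    show "pairwise disjnt (projn ` T)"
    proof (rule pairwiseI)
      fix A B assume "A \<in> projn ` T" "B \<in> projn ` T" "A \<noteq> B"
      then obtain g g' where "A = projn g" "B = projn g'" "projn g \<noteq> projn g'" by blast
      then show "disjnt A B" unfolding disjnt_def using projn_eq_if_mem by (metis disjoint_iff)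
    qed
  qed (use finite_projn inv in auto)
  also have "\<dots> = (\<Sum>A\<in>projn ` T. CARD('n))" using card_projn inv by (intro sum.cong) auto
  finally show ?thesis by simp
qed

definition commutes_up_to :: "'n::finite cmatrix \<Rightarrow> 'n cmatrix \<Rightarrow> complex \<Rightarrow> bool" where
  "commutes_up_to u h a \<longleftrightarrow> u ** h = scale_mat a (h ** u)"

lemma commutes_up_to_mult:
  assumes u: "commutes_up_to u h a" and v: "commutes_up_to v h b"
  shows "commutes_up_to (u ** v) h (a * b)"
  unfolding commutes_up_to_def
proof -
  have "(u ** v) ** h = u ** (v ** h)" by (simp add: matrix_mul_assoc)
  also have "\<dots> = scale_mat b ((u ** h) ** v)"
    using v unfolding commutes_up_to_def by (simp add: matrix_mul_assoc)
  also have "\<dots> = scale_mat (a * b) (h ** (u ** v))"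
    using u unfolding commutes_up_to_def by (simp add: matrix_mul_assoc mult.commute)
  finally show "(u ** v) ** h = scale_mat (a * b) (h ** (u ** v))" .
qed

lemma commutes_up_to_inverse:
  assumes inv: "invertible u" and a: "a \<noteq> 0" and t: "commutes_up_to u h a"
  shows "commutes_up_to (matrix_inv u) h (inverse a)"
proof -
  have "h ** matrix_inv u = matrix_inv u ** (u ** h) ** matrix_inv u"
    using matrix_inv_left[OF inv] by (simp add: matrix_mul_assoc)
  also have "\<dots> = scale_mat a (matrix_inv u ** h ** (u ** matrix_inv u))"
    using t unfolding commutes_up_to_def by (simp add: matrix_mul_assoc)
  also have "\<dots> = scale_mat a (matrix_inv u ** h)" using matrix_inv_right[OF inv] by simp
  finally have "scale_mat (inverse a) (h ** matrix_inv u) = matrix_inv u ** h" using a by simp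
  then show ?thesis unfolding commutes_up_to_def by simp
qed

lemma Un_H_commutes_up_to_root:
  fixes H :: "'n::finite cmatrix set"
  assumes a: "a \<in> Un_H H" and h: "h \<in> H"
  shows "\<exists>c. c ^ CARD('n) = 1 \<and> commutes_up_to a h c"
proof -
  have "projn a \<in> Zn H" using a unfolding Un_H_def by simp
  then have "projn (a ** h) = projn (h ** a)"
    using h unfolding Zn_def by (simp add: cosetmul_projn)
  then have "a ** h \<in> projn (h ** a)" using mem_projn_self[of "a ** h"] by simp
  then show ?thesis unfolding mem_projn_iff commutes_up_to_def scale_mat_def by blast
qed

lemma mem_Un_HI:
  fixes H :: "'n::finite cmatrix set"
  assumes g: "g \<in> SLn" and t: "\<forall>h\<in>H. \<exists>c. c ^ CARD('n) = 1 \<and> commutes_up_to g h c"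
  shows "g \<in> Un_H H"
proof -
  have "cosetmul (projn g) (projn h) = cosetmul (projn h) (projn g)" if h: "h \<in> H" for h
  proof -
    obtain c where c: "c ^ CARD('n) = 1" "g ** h = mat c ** (h ** g)"
      using t h unfolding commutes_up_to_def scale_mat_def by blast
    show ?thesis unfolding cosetmul_projn c(2) projn_scalar_mat_mult[OF c(1)] ..
  qed
  moreover have "projn g \<in> PSLn" using g unfolding PSLn_def by blast
  ultimately show ?thesis using g unfolding Un_H_def Zn_def by blast
qed

lemma Un_H_SLn: "a \<in> Un_H H \<Longrightarrow> a \<in> SLn"
  unfolding Un_H_def by simp

lemma Un_H_mult:
  fixes H :: "'n::finite cmatrix set"
  assumes a: "a \<in> Un_H H" and b: "b \<in> Un_H H"
  shows "a ** b \<in> Un_H H"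
proof (rule mem_Un_HI)
  show "a ** b \<in> SLn" using Un_H_SLn[OF a] Un_H_SLn[OF b] by (simp add: mem_SLn_iff det_mul)
  show "\<forall>h\<in>H. \<exists>c. c ^ CARD('n) = 1 \<and> commutes_up_to (a ** b) h c"
  proof
    fix h assume h: "h \<in> H"
    obtain c where c: "c ^ CARD('n) = 1" "commutes_up_to a h c"
      using Un_H_commutes_up_to_root[OF a h] by blast
    obtain d where d: "d ^ CARD('n) = 1" "commutes_up_to b h d"
      using Un_H_commutes_up_to_root[OF b h] by blast
    show "\<exists>c. c ^ CARD('n) = 1 \<and> commutes_up_to (a ** b) h c"
      using commutes_up_to_mult[OF c(2) d(2)] c(1) d(1)
      by (intro exI[of _ "c * d"]) (simp add: power_mult_distrib)
  qed
qed

lemma Un_H_inverse: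
  fixes H :: "'n::finite cmatrix set"
  assumes a: "a \<in> Un_H H"
  shows "matrix_inv a \<in> Un_H H"
proof (rule mem_Un_HI)
  have inv: "invertible a" using invertible_if_SLn[OF Un_H_SLn[OF a]] .
  show "matrix_inv a \<in> SLn" using det_matrix_inv[OF inv] Un_H_SLn[OF a] by (simp add: mem_SLn_iff)
  show "\<forall>h\<in>H. \<exists>c. c ^ CARD('n) = 1 \<and> commutes_up_to (matrix_inv a) h c"
  proof
    fix h assume h: "h \<in> H"
    obtain c where c: "c ^ CARD('n) = 1" "commutes_up_to a h c"
      using Un_H_commutes_up_to_root[OF a h] by blast
    show "\<exists>c. c ^ CARD('n) = 1 \<and> commutes_up_to (matrix_inv a) h c"
      using commutes_up_to_inverse[OF inv root_of_unity_nonzero[OF c(1)] c(2)] c(1)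
      by (intro exI[of _ "inverse c"]) (simp add: power_inverse)
  qed
qed

lemma scalar_mat_in_Un_H:
  assumes "c ^ CARD('n) = 1"
  shows "mat c \<in> Un_H (H :: 'n::finite cmatrix set)"
proof (rule mem_Un_HI)
  show "(mat c :: 'n cmatrix) \<in> SLn" using assms by (simp add: mem_SLn_iff det_scalar_mat)
  show "\<forall>h\<in>H. \<exists>c'. c' ^ CARD('n) = 1 \<and> commutes_up_to (mat c) h c'"
    by (intro ballI exI[of _ 1]) (simp add: commutes_up_to_def scalar_mat_commute)
qed

lemma Zn_eq_projn_image: "Zn H = projn ` Un_H H"
  unfolding Zn_def Un_H_def PSLn_def by blast

lemma projn_subset_Un_H:
  fixes H :: "'n::finite cmatrix set"
  assumes "g \<in> Un_H H"
  shows "projn g \<subseteq> Un_H H"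
proof
  fix x assume "x \<in> projn g"
  then obtain c where "c ^ CARD('n) = 1" "x = mat c ** g" unfolding mem_projn_iff by blast
  then show "x \<in> Un_H H" using Un_H_mult[OF scalar_mat_in_Un_H assms] by simp
qed

lemma Un_H_commutator_scalar:
  fixes H :: "'n::finite cmatrix set"
  assumes irr: "sl_irreducible H" and a: "a \<in> Un_H H" and b: "b \<in> Un_H H"
  shows "\<exists>c. a ** b = mat c ** (b ** a)"
proof -
  have ia: "invertible a" and ib: "invertible b" using invertible_if_SLn Un_H_SLn a b by auto
  define d where "d = a ** b ** matrix_inv a ** matrix_inv b"
  have "d ** h = h ** d" if h: "h \<in> H" for h
  proof -
    obtain \<alpha> where \<alpha>: "\<alpha> ^ CARD('n) = 1" "commutes_up_to a h \<alpha>"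
      using Un_H_commutes_up_to_root[OF a h] by blast
    obtain \<beta> where \<beta>: "\<beta> ^ CARD('n) = 1" "commutes_up_to b h \<beta>"
      using Un_H_commutes_up_to_root[OF b h] by blast
    have "\<alpha> \<noteq> 0" "\<beta> \<noteq> 0" using root_of_unity_nonzero \<alpha> \<beta> by auto
    then have "commutes_up_to d h (\<alpha> * \<beta> * inverse \<alpha> * inverse \<beta>)"
      unfolding d_def by (intro commutes_up_to_mult commutes_up_to_inverse \<alpha> \<beta> ia ib)
    then have "commutes_up_to d h 1" using \<open>\<alpha> \<noteq> 0\<close> \<open>\<beta> \<noteq> 0\<close> by (simp add: field_simps)
    then show ?thesis by (simp add: commutes_up_to_def)
  qed
  then obtain c where c: "d = mat c" using schur_lemma[OF irr] by blast
  have "d ** (b ** a) = a ** b ** (matrix_inv a ** (matrix_inv b ** b) ** a)"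
    unfolding d_def by (simp add: matrix_mul_assoc)
  also have "\<dots> = a ** b" using matrix_inv_left[OF ia] matrix_inv_left[OF ib] by simp
  finally show ?thesis using c by metis
qed

text \<open>A non-scalar \<open>a\<close> does not commute with some \<open>h \<in> H\<close> (Schur), so \<open>h\<^sup>-\<^sup>1 a h = c a\<close> with
  \<open>c \<noteq> 1\<close>, and comparing traces forces \<open>tr a = 0\<close>.\<close>

lemma trace_Un_H_non_scalar:
  fixes H :: "'n::finite cmatrix set"
  assumes sg: "sl_subgroup H" and irr: "sl_irreducible H"
    and a: "a \<in> Un_H H" and ns: "\<forall>c. a \<noteq> mat c"
  shows "trace a = 0"
proof -
  obtain h where h: "h \<in> H" "a ** h \<noteq> h ** a" using schur_lemma[OF irr] ns by blast
  obtain c where c: "c ^ CARD('n) = 1" "commutes_up_to a h c"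
    using Un_H_commutes_up_to_root[OF a h(1)] by blast
  have c1: "c \<noteq> 1" using c h(2) by (auto simp: commutes_up_to_def)
  have ih: "invertible h" using invertible_if_SLn h(1) sg unfolding sl_subgroup_def by blast
  have "matrix_inv h ** (a ** h) = scale_mat c (matrix_inv h ** (h ** a))"
    using c(2) by (simp add: commutes_up_to_def)
  also have "\<dots> = scale_mat c a" using matrix_inv_left[OF ih] by (simp add: matrix_mul_assoc)
  finally have eq: "matrix_inv h ** (a ** h) = mat c ** a" by (simp add: scale_mat_def)
  have "trace a = trace ((a ** h) ** matrix_inv h)"
    using matrix_inv_right[OF ih] by (simp add: matrix_mul_assoc[symmetric])
  also have "\<dots> = trace (matrix_inv h ** (a ** h))" by (rule trace_mul_sym)
  also have "\<dots> = c * trace a" unfolding eq by (rule trace_scalar_mat_mult)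
  finally have "(1 - c) * trace a = 0" by (simp add: algebra_simps)
  then show ?thesis using c1 by simp
qed

lemma trace_Un_H_quotient:
  fixes H :: "'n::finite cmatrix set"
  assumes sg: "sl_subgroup H" and irr: "sl_irreducible H"
    and a: "a \<in> Un_H H" and b: "b \<in> Un_H H" and ab: "projn a \<noteq> projn b"
  shows "trace (matrix_inv a ** b) = 0"
proof (rule trace_Un_H_non_scalar[OF sg irr Un_H_mult[OF Un_H_inverse[OF a] b]], intro allI notI)
  fix c assume c: "matrix_inv a ** b = mat c"
  have ia: "invertible a" using invertible_if_SLn[OF Un_H_SLn[OF a]] .
  have "b = a ** (matrix_inv a ** b)" using matrix_inv_right[OF ia] by (simp add: matrix_mul_assoc)
  then have bc: "b = mat c ** a" using c by (simp add: scalar_mat_commute)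
  have "c ^ CARD('n) = 1"
    using Un_H_SLn[OF a] Un_H_SLn[OF b] bc by (simp add: mem_SLn_iff det_mul det_scalar_mat)
  then show False using ab bc projn_scalar_mat_mult[of c a] by simp
qed

lemma finite_Zn:
  fixes H :: "'n::finite cmatrix set"
  assumes sg: "sl_subgroup H" and irr: "sl_irreducible H"
  shows "finite (Zn H)"
proof -
  define lift where "lift z = (SOME g. g \<in> z)" for z :: "'n cmatrix set"
  have lift: "lift z \<in> Un_H H \<and> projn (lift z) = z" if z: "z \<in> Zn H" for z
  proof -
    obtain g where g: "g \<in> Un_H H" "z = projn g" using z Zn_eq_projn_image by blast
    have "lift z \<in> z" unfolding lift_def using g mem_projn_self by (metis someI_ex)
    then show ?thesis using g projn_subset_Un_H projn_eq_if_mem by blast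
  qed
  then have "inj_on lift (Zn H)" by (metis inj_onI)
  moreover have "finite (lift ` Zn H)"
  proof (rule finite_if_trace_orthogonal)
    show "\<forall>a\<in>lift ` Zn H. invertible a" using lift invertible_if_SLn Un_H_SLn by blast
    show "\<forall>a\<in>lift ` Zn H. \<forall>b\<in>lift ` Zn H. a \<noteq> b \<longrightarrow> trace (matrix_inv a ** b) = 0"
    proof (intro ballI impI)
      fix a b assume "a \<in> lift ` Zn H" "b \<in> lift ` Zn H" "a \<noteq> b"
      then obtain z z' where "z \<in> Zn H" "z' \<in> Zn H" "a = lift z" "b = lift z'" "z \<noteq> z'" by blast
      then show "trace (matrix_inv a ** b) = 0"
        using lift trace_Un_H_quotient[OF sg irr, of a b] by auto
    qed
  qed
  ultimately show ?thesis using finite_imageD by blast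
qed

lemma finite_Un_H:
  fixes H :: "'n::finite cmatrix set"
  assumes "sl_subgroup H" "sl_irreducible H"
  shows "finite (Un_H H)"
proof -
  have "Un_H H = \<Union> (projn ` Un_H H)" using projn_subset_Un_H mem_projn_self by blast
  moreover have "finite (\<Union> (projn ` Un_H H))"
  proof (rule finite_Union)
    show "finite (projn ` Un_H H)" using finite_Zn[OF assms] Zn_eq_projn_image by metis
  qed (use finite_projn invertible_if_SLn Un_H_SLn in blast)
  ultimately show ?thesis by simp
qed

lemma scalar_commutator_group_Un_H:
  fixes H :: "'n::finite cmatrix set"
  assumes sg: "sl_subgroup H" and irr: "sl_irreducible H"
  shows "scalar_commutator_group (Un_H H)"
  unfolding scalar_commutator_group_def matrix_group_def
  using finite_Un_H[OF sg irr] scalar_mat_in_Un_H[of 1 H] Un_H_mult[of _ H] Un_H_inverse[of _ H]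
    invertible_if_SLn[OF Un_H_SLn[of _ H]] Un_H_commutator_scalar[OF irr]
  by (intro conjI ballI) auto

lemma card_Un_H: "card (Un_H H) = CARD('n) * card (Zn (H :: 'n::finite cmatrix set))"
  using card_eq_card_projn_image[of "Un_H H"] invertible_if_SLn Un_H_SLn
    Un_H_mult[OF scalar_mat_in_Un_H] Zn_eq_projn_image by metis

text \<open>\<open>\<phi>\<^sub>H\<close> does not depend on the lifts, which differ from \<open>g, g'\<close> only by scalars.\<close>

lemma phiH_projn:
  fixes H :: "'n::finite cmatrix set"
  assumes sg: "sl_subgroup H" and irr: "sl_irreducible H"
    and g: "g \<in> Un_H H" and g': "g' \<in> Un_H H"
  shows "phiH (projn g) (projn g') = comm_scalar g g'"
proof -
  note S = scalar_commutator_group_Un_H[OF sg irr]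
  define x where "x = (SOME x. x \<in> projn g)"
  define y where "y = (SOME y. y \<in> projn g')"
  have "x \<in> projn g" "y \<in> projn g'" unfolding x_def y_def using mem_projn_self by (metis someI_ex)+
  then obtain c d where c: "c ^ CARD('n) = 1" "x = mat c ** g" and d: "d ^ CARD('n) = 1" "y = mat d ** g'"
    unfolding mem_projn_iff by blast
  have xU: "x \<in> Un_H H" and yU: "y \<in> Un_H H"
    using Un_H_mult[OF scalar_mat_in_Un_H] g g' c d by simp_all
  have "comm_scalar x y = comm_scalar g g'"
    using comm_scalar_scalar_mat_mult[OF S g g'] xU yU c d root_of_unity_nonzero[OF c(1)]
      root_of_unity_nonzero[OF d(1)] by simp
  then have comm: "x ** y ** matrix_inv x ** matrix_inv y = mat (comm_scalar g g')"
    using commutator_eq_comm_scalar[OF S xU yU] by simp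
  show ?thesis
    unfolding phiH_def Let_def x_def[symmetric] y_def[symmetric]
    by (rule the_equality) (use comm in auto)
qed

lemma radK_eq_projn_centre:
  fixes H :: "'n::finite cmatrix set"
  assumes sg: "sl_subgroup H" and irr: "sl_irreducible H"
  shows "radK H = projn ` centre (Un_H H)"
proof -
  note S = scalar_commutator_group_Un_H[OF sg irr]
  have Z: "Zn H = projn ` Un_H H" by (rule Zn_eq_projn_image)
  have "projn g \<in> radK H \<longleftrightarrow> g \<in> centre (Un_H H)" if g: "g \<in> Un_H H" for g
  proof -
    have "projn g \<in> radK H \<longleftrightarrow> (\<forall>g'\<in>Un_H H. phiH (projn g) (projn g') = 1)"
      using g unfolding radK_def Z by auto
    also have "\<dots> \<longleftrightarrow> (\<forall>g'\<in>Un_H H. g ** g' = g' ** g)"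
      using phiH_projn[OF sg irr g] comm_scalar_eq_1_iff[OF S g] by simp
    finally show ?thesis using g unfolding centre_def by simp
  qed
  moreover have "radK H \<subseteq> projn ` Un_H H" unfolding radK_def Z by auto
  ultimately show ?thesis using centre_subset by blast
qed

lemma card_centre_Un_H:
  fixes H :: "'n::finite cmatrix set"
  assumes sg: "sl_subgroup H" and irr: "sl_irreducible H"
  shows "card (centre (Un_H H)) = CARD('n) * card (radK H)"
proof -
  have "mat c ** g \<in> centre (Un_H H)" if g: "g \<in> centre (Un_H H)" and c: "c ^ CARD('n) = 1" for g c
  proof -
    have "(mat c ** g) ** b = b ** (mat c ** g)" if "b \<in> Un_H H" for b
      using g that unfolding centre_def
      by (simp add: scale_mat_def[symmetric])
    then show ?thesis using g Un_H_mult[OF scalar_mat_in_Un_H[OF c]] unfolding centre_def by simp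
  qed
  then show ?thesis
    using card_eq_card_projn_image[of "centre (Un_H H)"] radK_eq_projn_centre[OF sg irr]
      centre_subset invertible_if_SLn Un_H_SLn by (metis subsetD)
qed

lemma mat_in_Un_H_iff: "mat c \<in> Un_H (H :: 'n::finite cmatrix set) \<longleftrightarrow> c ^ CARD('n) = 1"
  using scalar_mat_in_Un_H[of c H] Un_H_SLn[of "mat c" H] by (auto simp: mem_SLn_iff det_scalar_mat)

lemma mat_in_centre_Un_H:
  assumes "c ^ CARD('n) = 1"
  shows "mat c \<in> centre (Un_H (H :: 'n::finite cmatrix set))"
proof -
  have "mat c \<in> Un_H H" using assms mat_in_Un_H_iff by blast
  moreover have "mat c ** b = b ** mat c" for b :: "'n cmatrix" by (rule scalar_mat_commute[symmetric])
  ultimately show ?thesis unfolding centre_def by blast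
qed

lemma square_root_dvd:
  fixes N n Z :: nat
  assumes "N ^ 2 = n ^ 2 * Z" "N dvd n * n" "0 < n"
  shows "\<exists>m. m ^ 2 = Z \<and> m dvd n"
proof -
  have "n ^ 2 dvd N ^ 2" using assms(1) by simp
  then have "n dvd N" by simp
  then obtain m where m: "N = n * m" by blast
  then have "m ^ 2 = Z" using assms(1,3) by (simp add: power_mult_distrib)
  moreover have "m dvd n" using assms(2,3) m by simp
  ultimately show ?thesis by blast
qed

theorem mainTheorem10:
  fixes H :: "(complex^'n::finite^'n) set"
  assumes "sl_subgroup H" and "sl_irreducible H"
  shows "\<exists>m::nat. lagr_order H = real m \<and> m dvd CARD('n)"
proof -
  let ?U = "Un_H H"
  obtain L where L: "centre ?U \<subseteq> L" "L \<subseteq> ?U" "scalar_commutator_group L" "centre L = L"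
      "card L ^ 2 = card ?U * card (centre ?U)"
    using exists_lagrangian_subgroup[OF scalar_commutator_group_Un_H[OF assms]] by blast
  have "\<forall>a\<in>L. \<forall>b\<in>L. a ** b = b ** a" using L(4) by (simp only: centre_eq_self_iff)
  moreover have "\<forall>a\<in>L. (\<forall>c. a \<noteq> mat c) \<longrightarrow> trace a = 0"
    using L(2) trace_Un_H_non_scalar[OF assms] by blast
  ultimately have "card L dvd CARD('n) * card {c. mat c \<in> L}"
    using card_dvd_if_traceless scalar_commutator_groupD(1,2)[OF L(3)] by blast
  moreover have "{c. mat c \<in> L} = {c. c ^ CARD('n) = 1}"
    using L(1,2) mat_in_Un_H_iff mat_in_centre_Un_H by blast
  ultimately have "card L dvd CARD('n) * CARD('n)" using card_roots_unity_eq[of "CARD('n)"] by simp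
  moreover have "card L ^ 2 = CARD('n) ^ 2 * (card (Zn H) * card (radK H))"
    using L(5) card_Un_H[of H] card_centre_Un_H[OF assms] by (simp add: power2_eq_square)
  ultimately obtain m where m: "m ^ 2 = card (Zn H) * card (radK H)" "m dvd CARD('n)"
    using square_root_dvd[of "card L" "CARD('n)"] by auto
  have "lagr_order H = sqrt (real (m ^ 2))" unfolding lagr_order_def m(1) ..
  then show ?thesis using m(2) by auto
qed

end
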